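(* Let $X$ be a nontrivial real Hausdorff locally convex space, $f\in\Gamma(X)$, $x^{\ast}\in X^{\ast}$, and $L:=\{u\in X: f_\infty(u)=\langle u,x^{\ast}\rangle,\ f_\infty(-u)=-\langle u,x^{\ast}\rangle\}$ (a closed linear subspace). Let $X/L$ carry the quotient topology, $\pi(x)=\widehat{x}$ the natural projection, and define $h:X/L\to\mathbb{R}\cup\{\pm\infty\}$ by $h(\widehat{x}):=f(x)-\langle x,x^{\ast}\rangle$ (this is well defined, and $f=h\circ\pi+x^{\ast}$). Then: (a) $h\in\Gamma(X/L)$, $h_\infty(\widehat{u})=f_\infty(u)-\langle u,x^{\ast}\rangle$ for all $u\in X$, and $\{\widehat{u}\in X/L: h_\infty(\widehat{u})=h_\infty(-\widehat{u})=0\}=\{\widehat{0}\}$; (b) $h_\infty\ge0$ if and only if $x^{\ast}\in\overline{\operatorname{dom}f^{\ast}}$; (c) if $x^{\ast}\in\overline{\operatorname{dom}f^{\ast}}$ (in which case $L=L_f$), then $[h_\infty\le0]=\{\widehat{0}\}\iff x^{\ast}\in\operatorname{qri}\overline{\operatorname{dom}f^{\ast}}\iff L=[f_\infty\le x^{\ast}]\iff L=[f_\infty=x^{\ast}]$; (d) $\inf h=-f^{\ast}(x^{\ast})$, and so $h$ is bounded from below if and only if $x^{\ast}\in\operatorname{dom}f^{\ast}$; (e) $h$ attains its infimum on $X/L$ if and only if $x^{\ast}\in\operatorname{Im}\partial f$.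
   Context: $X^{\ast}$ is the dual of $X$ with the weak$^{\ast}$ topology (closures in $X^{\ast}$ are weak$^{\ast}$ closures), $\langle x,x^{\ast}\rangle=x^{\ast}(x)$. $\Gamma(V)$: proper lower semicontinuous convex functions on $V$. For $\varphi\in\Gamma(V)$: $\operatorname{dom}\varphi$, conjugate $\varphi^{\ast}(v^{\ast})=\sup_v(\langle v,v^{\ast}\rangle-\varphi(v))$, subdifferential $\partial\varphi(v)=\{v^{\ast}:\langle v'-v,v^{\ast}\rangle\le\varphi(v')-\varphi(v)\ \forall v'\}$ if $\varphi(v)\in\mathbb{R}$ (empty otherwise), $\operatorname{Im}\partial\varphi=\bigcup_v\partial\varphi(v)$, recession function $\varphi_\infty(u)=\lim_{t\to\infty}(\varphi(v_0+tu)-\varphi(v_0))/t$ for any $v_0\in\operatorname{dom}\varphi$. $L_f:=\{u: f_\infty(u)=\langle u,y^{\ast}\rangle,\ f_\infty(-u)=-\langle u,y^{\ast}\rangle\}$ for any $y^{\ast}\in\overline{\operatorname{dom}f^{\ast}}$ (independent of the choice). $[f_\infty\le x^{\ast}]=\{u:f_\infty(u)\le\langle u,x^{\ast}\rangle\}$, $[f_\infty=x^{\ast}]$ similarly. For convex $B\subset X^{\ast}$, $\operatorname{qri}B=\{b\in B:\overline{\mathbb{R}_+(B-b)}\text{ is a linear subspace}\}$. *)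

theory Defs
  imports "HOL-Analysis.Analysis"
begin

definition tvs :: "'a::{real_vector,topological_space} itself \<Rightarrow> bool" where
  "tvs _ \<longleftrightarrow> continuous_on UNIV (\<lambda>(x::'a, y::'a). x + y) \<and>
              continuous_on UNIV (\<lambda>(t::real, x::'a). t *\<^sub>R x)"

definition locally_convex :: "'a::{real_vector,topological_space} itself \<Rightarrow> bool" where
  "locally_convex _ \<longleftrightarrow> (\<forall>U::'a set. open U \<and> 0 \<in> U \<longrightarrow>
       (\<exists>V. open V \<and> convex V \<and> 0 \<in> V \<and> V \<subseteq> U))"

definition dual :: "('a::{real_vector,topological_space} \<Rightarrow> real) set" where
  "dual = {g. linear g \<and> continuous_on UNIV g}"

text \<open>Weak-star topology: the topology of pointwise convergence on X*, i.e. the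
  subspace topology of the product topology on functions X \<Rightarrow> real.\<close>
definition weakstar :: "('a::{real_vector,topological_space} \<Rightarrow> real) topology" where
  "weakstar = subtopology (product_topology (\<lambda>_. euclideanreal) UNIV) dual"

definition fsubspace :: "('a \<Rightarrow> real) set \<Rightarrow> bool" where
  "fsubspace S \<longleftrightarrow> (\<lambda>_. 0) \<in> S \<and> (\<forall>a\<in>S. \<forall>b\<in>S. (\<lambda>x. a x + b x) \<in> S)
      \<and> (\<forall>c. \<forall>a\<in>S. (\<lambda>x. c * a x) \<in> S)"

definition qri :: "('a::{real_vector,topological_space} \<Rightarrow> real) set \<Rightarrow> ('a \<Rightarrow> real) set" where
  "qri B = {b\<in>B. fsubspace (weakstar closure_of
              {(\<lambda>x. t * (c x - b x)) | t c. t \<ge> 0 \<and> c \<in> B})}"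

definition efdom :: "('v \<Rightarrow> ereal) \<Rightarrow> 'v set" where
  "efdom \<phi> = {v. \<phi> v < \<infinity>}"

definition GammaF :: "'v topology \<Rightarrow> ('v \<Rightarrow> 'v \<Rightarrow> 'v) \<Rightarrow> (real \<Rightarrow> 'v \<Rightarrow> 'v) \<Rightarrow> 'v set
                      \<Rightarrow> ('v \<Rightarrow> ereal) \<Rightarrow> bool" where
  "GammaF T add sc C \<phi> \<longleftrightarrow>
     (\<forall>x\<in>C. \<phi> x \<noteq> -\<infinity>) \<and> (\<exists>x\<in>C. \<phi> x \<noteq> \<infinity>) \<and>
     (\<forall>x\<in>C. \<forall>y\<in>C. \<forall>t. 0 < t \<and> t < 1 \<longrightarrow>
         \<phi> (add (sc t x) (sc (1 - t) y)) \<le> ereal t * \<phi> x + ereal (1 - t) * \<phi> y) \<and>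
     (\<forall>a::real. closedin T {x\<in>C. \<phi> x \<le> ereal a})"

definition recc :: "('v \<Rightarrow> 'v \<Rightarrow> 'v) \<Rightarrow> (real \<Rightarrow> 'v \<Rightarrow> 'v) \<Rightarrow> 'v set \<Rightarrow> ('v \<Rightarrow> ereal)
                    \<Rightarrow> 'v \<Rightarrow> ereal" where
  "recc add sc C \<phi> u =
     (let v0 = (SOME v. v \<in> C \<and> \<bar>\<phi> v\<bar> \<noteq> \<infinity>) in
       Lim at_top (\<lambda>t::real. (\<phi> (add v0 (sc t u)) - \<phi> v0) / ereal t))"

abbreviation Gamma :: "('a::{real_vector,topological_space} \<Rightarrow> ereal) \<Rightarrow> bool" where
  "Gamma f \<equiv> GammaF euclidean (+) (*\<^sub>R) UNIV f"

abbreviation rec :: "('a::{real_vector,topological_space} \<Rightarrow> ereal) \<Rightarrow> 'a \<Rightarrow> ereal" where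
  "rec f \<equiv> recc (+) (*\<^sub>R) UNIV f"

definition conj :: "('a::{real_vector,topological_space} \<Rightarrow> ereal) \<Rightarrow> ('a \<Rightarrow> real) \<Rightarrow> ereal" where
  "conj f y = (SUP v. ereal (y v) - f v)"

definition domconj :: "('a::{real_vector,topological_space} \<Rightarrow> ereal) \<Rightarrow> ('a \<Rightarrow> real) set" where
  "domconj f = {y\<in>dual. conj f y < \<infinity>}"

definition subdiff :: "('a::{real_vector,topological_space} \<Rightarrow> ereal) \<Rightarrow> 'a \<Rightarrow> ('a \<Rightarrow> real) set" where
  "subdiff f v = (if \<bar>f v\<bar> \<noteq> \<infinity> then
       {y\<in>dual. \<forall>v'. ereal (y (v' - v)) \<le> f v' - f v} else {})"

definition Im_subdiff :: "('a::{real_vector,topological_space} \<Rightarrow> ereal) \<Rightarrow> ('a \<Rightarrow> real) set" where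
  "Im_subdiff f = (\<Union>v. subdiff f v)"

text \<open>\<open>L_f\<close>, using an (arbitrary) element of the weak-star closure of dom f*.\<close>
definition Lf :: "('a::{real_vector,topological_space} \<Rightarrow> ereal) \<Rightarrow> 'a set" where
  "Lf f = (let y = (SOME y. y \<in> weakstar closure_of domconj f) in
     {u. rec f u = ereal (y u) \<and> rec f (- u) = ereal (- y u)})"

definition proj :: "'a::real_vector set \<Rightarrow> 'a \<Rightarrow> 'a set" where
  "proj L x = (\<lambda>l. x + l) ` L"

definition cosets :: "'a::real_vector set \<Rightarrow> 'a set set" where
  "cosets L = range (proj L)"

definition rep :: "'a set \<Rightarrow> 'a" where
  "rep A = (SOME x. x \<in> A)"

definition qadd :: "'a::real_vector set \<Rightarrow> 'a set \<Rightarrow> 'a set \<Rightarrow> 'a set" where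
  "qadd L A B = proj L (rep A + rep B)"

definition qscale :: "'a::real_vector set \<Rightarrow> real \<Rightarrow> 'a set \<Rightarrow> 'a set" where
  "qscale L t A = proj L (t *\<^sub>R rep A)"

definition qtop :: "'a::{real_vector,topological_space} set \<Rightarrow> 'a set topology" where
  "qtop L = topology (\<lambda>U. U \<subseteq> cosets L \<and> open (proj L -` U))"

lemma istopology_qtop: "istopology (\<lambda>U. U \<subseteq> cosets L \<and> open (proj L -` (U::'a::{real_vector,topological_space} set set)))"
  unfolding istopology_def
  by (auto simp: vimage_Int vimage_Union intro!: open_Int open_UN)

lemma openin_qtop: "openin (qtop L) U \<longleftrightarrow> U \<subseteq> cosets L \<and> open (proj L -` U)"
  unfolding qtop_def using istopology_qtop topology_inverse' by metis

definition hq :: "('a::real_vector \<Rightarrow> ereal) \<Rightarrow> ('a \<Rightarrow> real) \<Rightarrow> 'a set \<Rightarrow> 'a set \<Rightarrow> ereal" where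
  "hq f xs L A = f (rep A) - ereal (xs (rep A))"

end

theory Submission
  imports Defs "HOL-Library.Function_Algebras"
begin

text \<open>Two separation theorems carry the argument, both obtained from the algebraic Hahn-Banach
  theorem via Minkowski functionals of absorbing convex sets. In \<open>X \<times> \<real>\<close>, a point strictly below
  the closed convex epigraph of \<open>f\<close> is separated from it by a continuous functional, so \<open>f\<close> is
  the supremum of its continuous affine minorants and \<open>f\<^sub>\<infinity>\<close> is the support function of
  \<open>dom f*\<close>. In \<open>X*\<close> with the weak-star topology, whose dual is \<open>X\<close>, a point outside the
  closure of a convex set is separated from it by an evaluation at a point of \<open>X\<close>; hence the
  weak-star closure of \<open>dom f*\<close> is \<open>{y. y \<le> f\<^sub>\<infinity>}\<close>, and the closed cone generated by
  this set minus \<open>x*\<close> is the polar cone of \<open>[f\<^sub>\<infinity> \<le> x*]\<close>, which is a subspace exactly when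
  \<open>[f\<^sub>\<infinity> \<le> x*]\<close> is symmetric.

  Since \<open>f\<^sub>\<infinity>\<close> is sublinear, \<open>L\<close> is the lineality space of the convex cone \<open>[f\<^sub>\<infinity> \<le> x*]\<close>,
  and \<open>f\<close> is affine along \<open>L\<close> with slope \<open>x*\<close>, so \<open>h\<close> is well defined and inherits
  everything from \<open>f - x*\<close>; parts (a)-(c) become statements about \<open>[f\<^sub>\<infinity> \<le> x*]\<close>, while
  (d) and (e) are the definitions of \<open>f*(x*)\<close> and \<open>\<partial>f\<close> read on \<open>f - x*\<close>.\<close>

section \<open>The Hahn-Banach theorem for sublinear functionals\<close>

definition sublinear :: "('b::real_vector \<Rightarrow> real) \<Rightarrow> bool" where
  "sublinear p \<longleftrightarrow> (\<forall>x y. p (x + y) \<le> p x + p y) \<and> (\<forall>t x. 0 \<le> t \<longrightarrow> p (t *\<^sub>R x) = t * p x)"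

lemma sublinear_zero: "sublinear p \<Longrightarrow> p 0 = 0"
  unfolding sublinear_def by (metis mult_zero_left order_refl scaleR_zero_left)

lemma sublinear_scaleR_ge:
  assumes "sublinear p"
  shows "c * p x \<le> p (c *\<^sub>R x)"
proof (cases "c \<ge> 0")
  case True
  then show ?thesis using assms unfolding sublinear_def by simp
next
  case False
  have "0 = p (x + - x)" using sublinear_zero[OF assms] by simp
  also have "\<dots> \<le> p x + p (- x)" using assms unfolding sublinear_def by blast
  finally have "- p (- x) \<le> p x" by simp
  then have "c * p x \<le> (- c) * p (- x)"
    using False mult_left_mono_neg[of "- p (- x)" "p x" c] by simp
  also have "\<dots> = p ((- c) *\<^sub>R (- x))"
    using assms False unfolding sublinear_def by (simp del: scaleR_minus_left scaleR_minus_right)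
  also have "\<dots> = p (c *\<^sub>R x)" by simp
  finally show ?thesis .
qed

text \<open>Partial linear functionals below \<open>p\<close> that agree with \<open>p\<close> at \<open>x0\<close>, encoded by their graphs
  in \<open>X \<times> \<real>\<close>; Zorn's lemma is applied to this family.\<close>
definition dominated_linear_graph :: "('b::real_vector \<Rightarrow> real) \<Rightarrow> 'b \<Rightarrow> ('b \<times> real) set \<Rightarrow> bool" where
  "dominated_linear_graph p x0 G \<longleftrightarrow>
     subspace G \<and> single_valued G \<and> (x0, p x0) \<in> G \<and> (\<forall>(x, r)\<in>G. r \<le> p x)"

lemma dominated_linear_graph_line:
  assumes "sublinear p"
  shows "dominated_linear_graph p x0 (range (\<lambda>c. c *\<^sub>R (x0, p x0)))"
proof -
  let ?G = "range (\<lambda>c. c *\<^sub>R (x0, p x0))"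
  have "subspace ?G"
    using subspace_span[of "{(x0, p x0)}"] by (simp add: span_singleton)
  moreover have "single_valued ?G"
  proof (rule single_valuedI)
    fix x r r' assume "(x, r) \<in> ?G" "(x, r') \<in> ?G"
    then obtain c c' where "(x, r) = c *\<^sub>R (x0, p x0)" "(x, r') = c' *\<^sub>R (x0, p x0)"
      by blast
    then show "r = r'" by (cases "x0 = 0") (auto simp: sublinear_zero[OF assms])
  qed
  moreover have "(x0, p x0) \<in> ?G" by (metis rangeI scaleR_one)
  moreover have "\<forall>(x, r)\<in>?G. r \<le> p x" using sublinear_scaleR_ge[OF assms] by auto
  ultimately show ?thesis unfolding dominated_linear_graph_def by blast
qed

lemma dominated_linear_graph_Union_chain:
  assumes C: "C \<in> chains {G. dominated_linear_graph p x0 G}" "C \<noteq> {}"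
  shows "dominated_linear_graph p x0 (\<Union>C)"
proof -
  have sub: "subspace G" and sv: "single_valued G" and base: "(x0, p x0) \<in> G"
    and dom: "\<forall>(x, r)\<in>G. r \<le> p x" if "G \<in> C" for G
    using chainsD2[OF C(1)] that unfolding dominated_linear_graph_def by auto
  have common: "\<exists>G\<in>C. a \<in> G \<and> b \<in> G" if "a \<in> \<Union>C" "b \<in> \<Union>C" for a b
    using that chainsD[OF C(1)] by blast
  obtain G0 where G0: "G0 \<in> C" using C(2) by blast
  have "subspace (\<Union>C)"
    unfolding subspace_def
  proof (intro conjI ballI allI)
    show "0 \<in> \<Union>C" using subspace_0[OF sub[OF G0]] G0 by blast
    show "a + b \<in> \<Union>C" if "a \<in> \<Union>C" "b \<in> \<Union>C" for a b
      using common[OF that] subspace_add[OF sub] by blast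
    show "c *\<^sub>R a \<in> \<Union>C" if "a \<in> \<Union>C" for c :: real and a
      using that subspace_scale[OF sub] by blast
  qed
  moreover have "single_valued (\<Union>C)"
  proof (rule single_valuedI)
    fix x r r' assume "(x, r) \<in> \<Union>C" "(x, r') \<in> \<Union>C"
    then show "r = r'" using common sv by (meson single_valuedD)
  qed
  moreover have "(x0, p x0) \<in> \<Union>C" using base[OF G0] G0 by blast
  moreover have "r \<le> p x" if "(x, r) \<in> \<Union>C" for x r
    using that dom by blast
  ultimately show ?thesis unfolding dominated_linear_graph_def by fast
qed

lemma dominated_extension_value:
  assumes p: "sublinear p" and M: "subspace M" "\<forall>(x, r)\<in>M. r \<le> p x"
  obtains c where "\<And>x r. (x, r) \<in> M \<Longrightarrow> r - p (x - z) \<le> c"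
    and "\<And>y s. (y, s) \<in> M \<Longrightarrow> c \<le> p (y + z) - s"
proof -
  let ?lower = "{r - p (x - z) | x r. (x, r) \<in> M}"
  have key: "r - p (x - z) \<le> p (y + z) - s" if "(x, r) \<in> M" "(y, s) \<in> M" for x r y s
  proof -
    have "(x + y, r + s) \<in> M" using subspace_add[OF M(1) that] by simp
    then have "r + s \<le> p (x + y)" using M(2) by auto
    also have "\<dots> = p ((x - z) + (y + z))" by (simp add: algebra_simps)
    also have "\<dots> \<le> p (x - z) + p (y + z)" using p unfolding sublinear_def by blast
    finally show ?thesis by simp
  qed
  have "(0, 0) \<in> M" using subspace_0[OF M(1)] by (simp add: zero_prod_def)
  then have ne: "?lower \<noteq> {}" and bdd: "bdd_above ?lower"
    unfolding bdd_above_def using key by blast+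
  show ?thesis
  proof
    show "r - p (x - z) \<le> Sup ?lower" if "(x, r) \<in> M" for x r
      using that by (intro cSup_upper[OF _ bdd]) blast
    show "Sup ?lower \<le> p (y + z) - s" if "(y, s) \<in> M" for y s
      using that key by (intro cSup_least[OF ne]) blast
  qed
qed

definition line_extension :: "('b::real_vector \<times> real) set \<Rightarrow> 'b \<Rightarrow> real \<Rightarrow> ('b \<times> real) set" where
  "line_extension M z c = {(x + a *\<^sub>R z, r + a * c) | x r a. (x, r) \<in> M}"

lemma subspace_line_extension:
  assumes M: "subspace M"
  shows "subspace (line_extension M z c)"
proof -
  let ?E = "line_extension M z c"
  have "(0 + 0 *\<^sub>R z, 0 + 0 * c) \<in> ?E"
    unfolding line_extension_def using subspace_0[OF M] by (force simp: zero_prod_def)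
  then have "0 \<in> ?E" by (simp add: zero_prod_def)
  moreover have "q1 + q2 \<in> ?E" if q: "q1 \<in> ?E" "q2 \<in> ?E" for q1 q2
  proof -
    obtain x1 r1 a1 x2 r2 a2 where e: "(x1, r1) \<in> M" "q1 = (x1 + a1 *\<^sub>R z, r1 + a1 * c)"
      "(x2, r2) \<in> M" "q2 = (x2 + a2 *\<^sub>R z, r2 + a2 * c)"
      using q unfolding line_extension_def by blast
    have "(x1 + x2, r1 + r2) \<in> M" using subspace_add[OF M e(1,3)] by simp
    then have "((x1 + x2) + (a1 + a2) *\<^sub>R z, (r1 + r2) + (a1 + a2) * c) \<in> ?E"
      unfolding line_extension_def by blast
    then show ?thesis using e(2,4) by (simp add: algebra_simps)
  qed
  moreover have "t *\<^sub>R q \<in> ?E" if q: "q \<in> ?E" for t q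
  proof -
    obtain x r a where e: "(x, r) \<in> M" "q = (x + a *\<^sub>R z, r + a * c)"
      using q unfolding line_extension_def by blast
    have "(t *\<^sub>R x, t * r) \<in> M" using subspace_scale[OF M e(1), of t] by simp
    then have "(t *\<^sub>R x + (t * a) *\<^sub>R z, t * r + (t * a) * c) \<in> ?E"
      unfolding line_extension_def by blast
    then show ?thesis using e(2) by (simp add: algebra_simps)
  qed
  ultimately show ?thesis unfolding subspace_def by blast
qed

lemma single_valued_line_extension:
  assumes M: "subspace M" "single_valued M" and z: "z \<notin> Domain M"
  shows "single_valued (line_extension M z c)"
proof (rule single_valuedI)
  fix x r r' assume "(x, r) \<in> line_extension M z c" "(x, r') \<in> line_extension M z c"
  then obtain x1 r1 a1 x2 r2 a2 where e: "(x1, r1) \<in> M" "(x2, r2) \<in> M"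
    "x = x1 + a1 *\<^sub>R z" "r = r1 + a1 * c" "x = x2 + a2 *\<^sub>R z" "r' = r2 + a2 * c"
    unfolding line_extension_def by blast
  have "a1 = a2"
  proof (rule ccontr)
    assume ne: "a1 \<noteq> a2"
    have "inverse (a1 - a2) *\<^sub>R ((x2, r2) - (x1, r1)) \<in> M"
      using e(1,2) M(1) by (intro subspace_scale subspace_diff)
    moreover have "x2 - x1 = (a1 - a2) *\<^sub>R z" using e(3,5) by (simp add: algebra_simps)
    then have "inverse (a1 - a2) *\<^sub>R (x2 - x1) = z" using ne by simp
    ultimately show False using z by force
  qed
  with e have "x1 = x2" by simp
  with e(1,2) M(2) have "r1 = r2" by (auto dest: single_valuedD)
  with e \<open>a1 = a2\<close> show "r = r'" by simp
qed

lemma dominated_ray_extension: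
  assumes p: "sublinear p" and M: "subspace M"
    and c: "\<And>y s. (y, s) \<in> M \<Longrightarrow> c \<le> p (y + z) - s" and xr: "(x, r) \<in> M" and a: "0 < a"
  shows "r + a * c \<le> p (x + a *\<^sub>R z)"
proof -
  have "(inverse a *\<^sub>R x, inverse a * r) \<in> M"
    using subspace_scale[OF M xr, of "inverse a"] by simp
  then have "inverse a * r + c \<le> p (inverse a *\<^sub>R x + z)" using c by fastforce
  then have "a * (inverse a * r + c) \<le> a * p (inverse a *\<^sub>R x + z)"
    using a by (intro mult_left_mono) auto
  also have "\<dots> = p (a *\<^sub>R (inverse a *\<^sub>R x + z))"
    using p a unfolding sublinear_def by simp
  also have "\<dots> = p (x + a *\<^sub>R z)" using a by (simp add: scaleR_add_right)
  finally have "a * (inverse a * r + c) \<le> p (x + a *\<^sub>R z)" .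
  moreover have "a * (inverse a * r + c) = r + a * c" using a by (simp add: field_simps)
  ultimately show ?thesis by simp
qed

lemma line_extension_dominated:
  assumes p: "sublinear p" and M: "subspace M"
    and c1: "\<And>x r. (x, r) \<in> M \<Longrightarrow> r - p (x - z) \<le> c"
    and c2: "\<And>y s. (y, s) \<in> M \<Longrightarrow> c \<le> p (y + z) - s"
    and dom: "\<forall>(x, r)\<in>M. r \<le> p x"
    and mem: "(x', r') \<in> line_extension M z c"
  shows "r' \<le> p x'"
proof -
  obtain x r a where e: "(x, r) \<in> M" "x' = x + a *\<^sub>R z" "r' = r + a * c"
    using mem unfolding line_extension_def by blast
  consider "a = 0" | "0 < a" | "0 < - a" by linarith
  then show ?thesis
  proof cases
    case 1
    then show ?thesis using e dom by auto
  next
    case 2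
    then show ?thesis using dominated_ray_extension[OF p M c2 e(1)] e by simp
  next
    case 3
    \<comment> \<open>the lower bounds on \<open>c\<close> are upper bounds on \<open>- c\<close> in the direction \<open>- z\<close>\<close>
    have "- c \<le> p (y + - z) - s" if "(y, s) \<in> M" for y s using c1[OF that] by simp
    from dominated_ray_extension[OF p M this e(1) 3] show ?thesis using e by simp
  qed
qed

lemma dominated_linear_graph_extend:
  assumes p: "sublinear p" and M: "dominated_linear_graph p x0 M" and z: "z \<notin> Domain M"
  shows "\<exists>M'. dominated_linear_graph p x0 M' \<and> M \<subset> M'"
proof -
  have sub: "subspace M" and sv: "single_valued M" and base: "(x0, p x0) \<in> M"
    and dom: "\<forall>(x, r)\<in>M. r \<le> p x"
    using M unfolding dominated_linear_graph_def by auto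
  obtain c where c1: "\<And>x r. (x, r) \<in> M \<Longrightarrow> r - p (x - z) \<le> c"
    and c2: "\<And>y s. (y, s) \<in> M \<Longrightarrow> c \<le> p (y + z) - s"
    using dominated_extension_value[OF p sub dom] by blast
  let ?M' = "line_extension M z c"
  have "(x + 0 *\<^sub>R z, r + 0 * c) \<in> ?M'" if "(x, r) \<in> M" for x r
    unfolding line_extension_def using that by blast
  then have "M \<subseteq> ?M'" by auto
  moreover have "(0 + 1 *\<^sub>R z, 0 + 1 * c) \<in> ?M'"
    unfolding line_extension_def using subspace_0[OF sub] by (force simp: zero_prod_def)
  then have "(z, c) \<in> ?M' - M" using z by (auto intro: DomainI)
  ultimately have "M \<subset> ?M'" by blast
  moreover have "dominated_linear_graph p x0 ?M'"
    unfolding dominated_linear_graph_def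
    using subspace_line_extension[OF sub] single_valued_line_extension[OF sub sv z]
      line_extension_dominated[OF p sub c1 c2 dom] base \<open>M \<subseteq> ?M'\<close> by blast
  ultimately show ?thesis by blast
qed

theorem Hahn_Banach_sublinear:
  assumes p: "sublinear p"
  obtains \<phi> where "linear \<phi>" "\<And>x. \<phi> x \<le> p x" "\<phi> x0 = p x0"
proof -
  let ?A = "{G. dominated_linear_graph p x0 G}"
  have "\<exists>U\<in>?A. \<forall>X\<in>C. X \<subseteq> U" if C: "C \<in> chains ?A" for C
  proof (cases "C = {}")
    case True
    then show ?thesis using dominated_linear_graph_line[OF p] by blast
  next
    case False
    then show ?thesis using dominated_linear_graph_Union_chain[OF C] by blast
  qed
  then have "\<exists>M\<in>?A. \<forall>X\<in>?A. M \<subseteq> X \<longrightarrow> X = M" by (rule Zorn_Lemma2[rule_format])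
  then obtain M where M: "dominated_linear_graph p x0 M"
    and max: "\<And>X. dominated_linear_graph p x0 X \<Longrightarrow> M \<subseteq> X \<Longrightarrow> X = M"
    by auto
  have sub: "subspace M" and sv: "single_valued M" and base: "(x0, p x0) \<in> M"
    and dom: "\<forall>(x, r)\<in>M. r \<le> p x"
    using M unfolding dominated_linear_graph_def by auto
  define \<phi> where "\<phi> x = (THE r. (x, r) \<in> M)" for x
  have graph: "(x, r) \<in> M \<longleftrightarrow> \<phi> x = r" for x r
  proof -
    have "x \<in> Domain M"
      using dominated_linear_graph_extend[OF p M, of x] max by blast
    then obtain r0 where r0: "(x, r0) \<in> M" by blast
    then have "\<phi> x = r0"
      unfolding \<phi>_def by (rule the_equality) (use sv r0 in \<open>auto dest: single_valuedD\<close>)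
    then show ?thesis using sv r0 by (auto dest: single_valuedD)
  qed
  have "linear \<phi>"
  proof (rule linearI)
    fix x y show "\<phi> (x + y) = \<phi> x + \<phi> y"
      using subspace_add[OF sub graph[of x "\<phi> x", simplified] graph[of y "\<phi> y", simplified]]
      by (simp add: graph)
  next
    fix c :: real and x show "\<phi> (c *\<^sub>R x) = c *\<^sub>R \<phi> x"
      using subspace_scale[OF sub graph[of x "\<phi> x", simplified], of c] by (simp add: graph)
  qed
  moreover have "\<phi> x \<le> p x" for x using dom graph[of x "\<phi> x"] by auto
  moreover have "\<phi> x0 = p x0" using base graph by blast
  ultimately show thesis using that by blast
qed

section \<open>Separation via Minkowski functionals\<close>

definition absorbing :: "'b::real_vector set \<Rightarrow> bool" where
  "absorbing C \<longleftrightarrow> (\<forall>x. \<exists>t>0. t *\<^sub>R x \<in> C)"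

lemma absorbing_zero: "absorbing C \<Longrightarrow> 0 \<in> C"
  unfolding absorbing_def by (metis scaleR_zero_right)

definition minkowski_functional :: "'b::real_vector set \<Rightarrow> 'b \<Rightarrow> real" where
  "minkowski_functional C x = Inf {r. 0 < r \<and> inverse r *\<^sub>R x \<in> C}"

context
  fixes C :: "'b::real_vector set"
  assumes convex: "convex C" and absorbing: "absorbing C"
begin

private lemma minkowski_set_nonempty: "{r. 0 < r \<and> inverse r *\<^sub>R x \<in> C} \<noteq> {}"
proof -
  obtain t where "t > 0" "t *\<^sub>R x \<in> C" using absorbing unfolding absorbing_def by blast
  then show ?thesis by (intro ex_in_conv[THEN iffD1] exI[of _ "inverse t"]) simp
qed

private lemma minkowski_set_bdd: "bdd_below {r. 0 < r \<and> inverse r *\<^sub>R x \<in> C}"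
  by (rule bdd_belowI[of _ 0]) simp

lemma minkowski_functional_nonneg: "0 \<le> minkowski_functional C x"
  unfolding minkowski_functional_def by (rule cInf_greatest[OF minkowski_set_nonempty]) simp

lemma minkowski_functional_le: "0 < r \<Longrightarrow> inverse r *\<^sub>R x \<in> C \<Longrightarrow> minkowski_functional C x \<le> r"
  unfolding minkowski_functional_def by (rule cInf_lower[OF _ minkowski_set_bdd]) simp

lemma minkowski_functional_less_imp_mem:
  assumes "minkowski_functional C x < r"
  shows "inverse r *\<^sub>R x \<in> C"
proof -
  obtain r' where r': "0 < r'" "inverse r' *\<^sub>R x \<in> C" "r' < r"
    using cInf_lessD[OF minkowski_set_nonempty assms[unfolded minkowski_functional_def]] by blast
  have "r' / r * inverse r' = inverse r" using r' by (simp add: field_simps)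
  then have eq: "(r' / r) *\<^sub>R (inverse r' *\<^sub>R x) + (1 - r' / r) *\<^sub>R 0 = inverse r *\<^sub>R x"
    by (simp only: scaleR_scaleR scaleR_zero_right add_0_right)
  have "(r' / r) *\<^sub>R (inverse r' *\<^sub>R x) + (1 - r' / r) *\<^sub>R 0 \<in> C"
    using r' by (intro convexD[OF convex r'(2) absorbing_zero[OF absorbing]]) auto
  then show ?thesis unfolding eq .
qed

lemma minkowski_functional_scaleR_le:
  assumes "0 < t"
  shows "minkowski_functional C (t *\<^sub>R x) \<le> t * minkowski_functional C x"
proof (rule field_le_epsilon)
  fix e :: real assume "0 < e"
  define r where "r = minkowski_functional C x + e / t"
  have r: "0 < r" "minkowski_functional C x < r"
    using \<open>0 < e\<close> assms minkowski_functional_nonneg[of x]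
      by (auto simp: r_def intro: add_nonneg_pos)
  have "inverse (t * r) * t = inverse r" using assms by simp
  then have "inverse (t * r) *\<^sub>R (t *\<^sub>R x) = inverse r *\<^sub>R x" by (simp only: scaleR_scaleR)
  then have "inverse (t * r) *\<^sub>R (t *\<^sub>R x) \<in> C"
    using minkowski_functional_less_imp_mem[OF r(2)] by (simp only:)
  then have "minkowski_functional C (t *\<^sub>R x) \<le> t * r"
    using r assms by (intro minkowski_functional_le) auto
  also have "t * r = t * minkowski_functional C x + e" using assms by (simp add: r_def field_simps)
  finally show "minkowski_functional C (t *\<^sub>R x) \<le> t * minkowski_functional C x + e" .
qed

lemma minkowski_functional_scaleR:
  assumes "0 \<le> t"
  shows "minkowski_functional C (t *\<^sub>R x) = t * minkowski_functional C x"
proof (cases "t = 0")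
  case True
  have "minkowski_functional C 0 \<le> e" if "0 < e" for e
    using that absorbing_zero[OF absorbing] by (intro minkowski_functional_le) auto
  then have "minkowski_functional C 0 \<le> 0" by (meson dense not_le)
  with True show ?thesis using minkowski_functional_nonneg[of 0] by simp
next
  case False
  with assms have t: "0 < t" by simp
  have "minkowski_functional C x = minkowski_functional C (inverse t *\<^sub>R (t *\<^sub>R x))" using t by simp
  also have "\<dots> \<le> inverse t * minkowski_functional C (t *\<^sub>R x)"
    using t by (intro minkowski_functional_scaleR_le) simp
  finally have "t * minkowski_functional C x \<le> minkowski_functional C (t *\<^sub>R x)"
    using t by (simp add: field_simps)
  then show ?thesis using minkowski_functional_scaleR_le[OF t, of x] by simp
qed

lemma minkowski_functional_add_le:
  "minkowski_functional C (x + y) \<le> minkowski_functional C x + minkowski_functional C y"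
proof (rule field_le_epsilon)
  fix e :: real assume "0 < e"
  define r where "r = minkowski_functional C x + e / 2"
  define s where "s = minkowski_functional C y + e / 2"
  have rs: "0 < r" "0 < s" "minkowski_functional C x < r" "minkowski_functional C y < s"
    using \<open>0 < e\<close> minkowski_functional_nonneg[of x] minkowski_functional_nonneg[of y]
    by (auto simp: r_def s_def)
  have "r / (r + s) * inverse r = inverse (r + s)" "s / (r + s) * inverse s = inverse (r + s)"
    using rs by (simp_all add: field_simps)
  then have eq: "(r / (r + s)) *\<^sub>R (inverse r *\<^sub>R x) + (s / (r + s)) *\<^sub>R (inverse s *\<^sub>R y)
      = inverse (r + s) *\<^sub>R (x + y)"
    by (simp add: scaleR_add_right)
  have "r / (r + s) + s / (r + s) = 1" using rs by (simp add: add_divide_distrib[symmetric])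
  then have "(r / (r + s)) *\<^sub>R (inverse r *\<^sub>R x) + (s / (r + s)) *\<^sub>R (inverse s *\<^sub>R y) \<in> C"
    using rs minkowski_functional_less_imp_mem by (intro convexD[OF convex]) auto
  then have "minkowski_functional C (x + y) \<le> r + s"
    unfolding eq using rs by (intro minkowski_functional_le) auto
  then show "minkowski_functional C (x + y)
      \<le> minkowski_functional C x + minkowski_functional C y + e"
    by (simp add: r_def s_def)
qed

lemma sublinear_minkowski_functional: "sublinear (minkowski_functional C)"
  unfolding sublinear_def using minkowski_functional_add_le minkowski_functional_scaleR by blast

lemma separation_absorbing_convex:
  assumes "z \<notin> C"
  obtains \<phi> :: "'b \<Rightarrow> real" where "linear \<phi>" "1 \<le> \<phi> z" "\<And>c. c \<in> C \<Longrightarrow> \<phi> c \<le> 1"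
proof -
  obtain \<phi> where \<phi>: "linear \<phi>" "\<And>x. \<phi> x \<le> minkowski_functional C x"
      "\<phi> z = minkowski_functional C z"
    using Hahn_Banach_sublinear[OF sublinear_minkowski_functional] by blast
  show thesis
  proof (rule that[OF \<phi>(1)])
    show "1 \<le> \<phi> z"
      using minkowski_functional_less_imp_mem[of z 1] assms \<phi>(3) by fastforce
    show "\<phi> c \<le> 1" if "c \<in> C" for c
      using \<phi>(2)[of c] minkowski_functional_le[of 1 c] that by simp
  qed
qed

end

text \<open>Both separation theorems below are instances: \<open>W\<close> plays the role of a convex
  neighbourhood of \<open>0\<close>, so that \<open>z\<close> is at positive distance from \<open>E\<close>.\<close>
theorem separation_convex_absorbing_gap:
  fixes E W :: "'b::real_vector set"
  assumes E: "convex E" "E \<noteq> {}" and W: "convex W" "absorbing W"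
    and z: "z \<notin> {p + w | p w. p \<in> E \<and> w \<in> W}"
  obtains \<phi> :: "'b \<Rightarrow> real" and t where "linear \<phi>" "0 < t" "\<And>w. w \<in> W \<Longrightarrow> \<phi> w \<le> 1"
    "\<And>p. p \<in> E \<Longrightarrow> \<phi> p + t \<le> \<phi> z"
proof -
  obtain e where e: "e \<in> E" using E(2) by blast
  define C where "C = (\<lambda>v. v - e) ` (\<Union>p\<in>E. \<Union>w\<in>W. {p + w})"
  have memC: "p - e + w \<in> C" if "p \<in> E" "w \<in> W" for p w
    unfolding C_def using that by (intro image_eqI[of _ _ "p + w"]) auto
  have "convex C"
    unfolding C_def by (intro convex_translation_subtract convex_sums E W)
  moreover have "absorbing C"
    using W(2) memC[OF e] unfolding absorbing_def by (metis diff_self add_0)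
  moreover have "z - e \<notin> C" using z unfolding C_def by auto
  ultimately obtain \<phi> :: "'b \<Rightarrow> real"
    where \<phi>: "linear \<phi>" "1 \<le> \<phi> (z - e)" "\<And>c. c \<in> C \<Longrightarrow> \<phi> c \<le> 1"
    by (rule separation_absorbing_convex) blast+
  obtain t where t: "0 < t" "t *\<^sub>R (z - e) \<in> W" using W(2) unfolding absorbing_def by blast
  have W1: "\<phi> w \<le> 1" if "w \<in> W" for w
    using \<phi>(3)[OF memC[OF e that]] by simp
  have gap: "\<phi> p + t \<le> \<phi> z" if "p \<in> E" for p
  proof -
    have "\<phi> p - \<phi> e + t * \<phi> (z - e) \<le> 1"
      using \<phi>(3)[OF memC[OF that t(2)]] by (simp add: linear_add[OF \<phi>(1)] linear_diff[OF \<phi>(1)]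
          linear_scale[OF \<phi>(1)])
    moreover have "1 + t \<le> (1 + t) * \<phi> (z - e)" using \<phi>(2) t(1) by simp
    ultimately show ?thesis using linear_diff[OF \<phi>(1), of z e] by (simp add: algebra_simps)
  qed
  show thesis using that[OF \<phi>(1) t(1) W1 gap] .
qed

section \<open>Topological vector spaces\<close>

lemma continuous_on_tvs_add:
  fixes f g :: "'b::topological_space \<Rightarrow> 'a::{real_vector,topological_space}"
  assumes "tvs TYPE('a)" "continuous_on S f" "continuous_on S g"
  shows "continuous_on S (\<lambda>x. f x + g x)"
  using continuous_on_compose2[of UNIV "\<lambda>(x::'a, y). x + y" S "\<lambda>x. (f x, g x)"] assms
  unfolding tvs_def by (auto intro: continuous_on_Pair)

lemma continuous_on_tvs_scaleR:
  fixes f :: "'b::topological_space \<Rightarrow> 'a::{real_vector,topological_space}"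
  assumes "tvs TYPE('a)" "continuous_on S a" "continuous_on S f"
  shows "continuous_on S (\<lambda>x. a x *\<^sub>R f x)"
  using continuous_on_compose2[of UNIV "\<lambda>(t, x::'a). t *\<^sub>R x" S "\<lambda>x. (a x, f x)"] assms
  unfolding tvs_def by (auto intro: continuous_on_Pair)

lemma continuous_on_tvs_affine:
  fixes d :: "'a::{real_vector,topological_space}"
  assumes "tvs TYPE('a)" "continuous_on S a" "continuous_on S f"
  shows "continuous_on S (\<lambda>x. d + a x *\<^sub>R f x)"
  using assms by (intro continuous_on_tvs_add continuous_on_tvs_scaleR continuous_on_const)

lemma open_tvs_affine_vimage:
  fixes d :: "'a::{real_vector,topological_space}"
  assumes "tvs TYPE('a)" "open V"
  shows "open {x. d + s *\<^sub>R x \<in> V}"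
  using open_vimage[OF assms(2)
      continuous_on_tvs_affine[OF assms(1) continuous_on_const continuous_on_id]]
  by (simp add: vimage_def)

lemma tvs_small_multiples_in_open:
  fixes x :: "'a::{real_vector,topological_space}"
  assumes "tvs TYPE('a)" "open V" "0 \<in> V"
  obtains e where "0 < e" "\<And>s. \<bar>s\<bar> < e \<Longrightarrow> s *\<^sub>R x \<in> V"
proof -
  have "open ((\<lambda>s. 0 + s *\<^sub>R x) -` V)"
    by (intro open_vimage assms(2) continuous_on_tvs_affine[OF assms(1)] continuous_on_id
        continuous_on_const)
  moreover have "0 \<in> (\<lambda>s. 0 + s *\<^sub>R x) -` V" using assms(3) by simp
  ultimately obtain e where "0 < e" "ball 0 e \<subseteq> (\<lambda>s. 0 + s *\<^sub>R x) -` V"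
    using open_contains_ball by blast
  then show thesis using that by (auto simp: dist_real_def subset_iff)
qed

lemma tvs_linear_continuous_if_bounded:
  fixes \<phi> :: "'a::{real_vector,topological_space} \<Rightarrow> real"
  assumes tvs: "tvs TYPE('a)" and lin: "linear \<phi>" and W: "open W" "0 \<in> W"
    and bounded: "\<And>w. w \<in> W \<Longrightarrow> \<bar>\<phi> w\<bar> \<le> 1"
  shows "continuous_on UNIV \<phi>"
  unfolding continuous_on_open_vimage[OF open_UNIV] Int_UNIV_right
proof (intro allI impI)
  fix B :: "real set" assume B: "open B"
  show "open (\<phi> -` B)"
    unfolding open_subopen[of "\<phi> -` B"]
  proof
    fix x assume "x \<in> \<phi> -` B"
    then obtain e where e: "0 < e" "ball (\<phi> x) e \<subseteq> B" using B open_contains_ball by blast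
    \<comment> \<open>the translate \<open>x + (e / 2) W\<close> is an open neighbourhood of \<open>x\<close> mapped into \<open>B\<close>\<close>
    define T where "T = {y. (- (2 / e) *\<^sub>R x) + (2 / e) *\<^sub>R y \<in> W}"
    have "T \<subseteq> \<phi> -` B"
    proof
      fix y assume "y \<in> T"
      define w where "w = (- (2 / e)) *\<^sub>R x + (2 / e) *\<^sub>R y"
      have w: "\<bar>\<phi> w\<bar> \<le> 1" using \<open>y \<in> T\<close> bounded unfolding T_def w_def by blast
      have "\<phi> w = (2 / e) * (\<phi> y - \<phi> x)"
        unfolding w_def
        by (simp only: linear_add[OF lin] linear_scale[OF lin])
          (simp add: algebra_simps diff_divide_distrib)
      then have "\<phi> y - \<phi> x = (e / 2) * \<phi> w" using e(1) by simp
      then have "\<bar>\<phi> y - \<phi> x\<bar> = \<bar>e / 2\<bar> * \<bar>\<phi> w\<bar>" by (simp only: abs_mult)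
      also have "\<dots> = e / 2 * \<bar>\<phi> w\<bar>" using e(1) by simp
      also have "\<dots> \<le> e / 2" using w e(1) by (simp add: mult_left_le)
      also have "\<dots> < e" using e(1) by simp
      finally have "\<bar>\<phi> y - \<phi> x\<bar> < e" .
      then show "y \<in> \<phi> -` B" using e(2) by (auto simp: dist_real_def abs_minus_commute)
    qed
    moreover have "open T" unfolding T_def by (rule open_tvs_affine_vimage[OF tvs W(1)])
    moreover have "x \<in> T" using W(2) unfolding T_def by simp
    ultimately show "\<exists>T. open T \<and> x \<in> T \<and> T \<subseteq> \<phi> -` B" by blast
  qed
qed

lemma linear_on_prod_real:
  fixes \<phi> :: "'b::real_vector \<times> real \<Rightarrow> real"
  assumes "linear \<phi>"
  shows "linear (\<lambda>x. \<phi> (x, 0))" "\<phi> (x, r) = \<phi> (x, 0) + \<phi> (0, 1) * r"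
proof -
  show "linear (\<lambda>x. \<phi> (x, 0))"
  proof (rule linearI)
    show "\<phi> (x + y, 0) = \<phi> (x, 0) + \<phi> (y, 0)" for x y
      using linear_add[OF assms, of "(x, 0)" "(y, 0)"] by simp
    show "\<phi> (c *\<^sub>R x, 0) = c *\<^sub>R \<phi> (x, 0)" for c x
      using linear_scale[OF assms, of c "(x, 0)"] by simp
  qed
  have "\<phi> (x, r) = \<phi> ((x, 0) + r *\<^sub>R (0, 1))" by simp
  also have "\<dots> = \<phi> (x, 0) + r * \<phi> (0, 1)"
    by (simp only: linear_add[OF assms] linear_scale[OF assms]) simp
  finally show "\<phi> (x, r) = \<phi> (x, 0) + \<phi> (0, 1) * r" by simp
qed

lemma dual_linear: "y \<in> dual \<Longrightarrow> linear y"
  and dual_continuous: "y \<in> dual \<Longrightarrow> continuous_on UNIV y"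
  unfolding dual_def by auto

lemma dual_scale: "y \<in> dual \<Longrightarrow> (\<lambda>x. a * y x) \<in> dual"
  unfolding dual_def
  by (auto intro!: continuous_intros linearI simp: linear_add linear_scale algebra_simps)

lemma dual_add: "y1 \<in> dual \<Longrightarrow> y2 \<in> dual \<Longrightarrow> (\<lambda>x. y1 x + y2 x) \<in> dual"
  unfolding dual_def by (auto intro!: continuous_intros linear_compose_add)

lemma dual_diff: "y1 \<in> dual \<Longrightarrow> y2 \<in> dual \<Longrightarrow> (\<lambda>x. y1 x - y2 x) \<in> dual"
  using dual_add[of y1 "\<lambda>x. (- 1) * y2 x"] dual_scale[of y2 "- 1"] by simp

lemma nonpos_if_multiples_bounded:
  fixes c K :: real
  assumes "\<And>t. 0 < t \<Longrightarrow> t * c \<le> K"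
  shows "c \<le> 0"
proof (rule ccontr)
  assume "\<not> c \<le> 0"
  then have "(\<bar>K\<bar> + 1) / c * c = \<bar>K\<bar> + 1" "0 < (\<bar>K\<bar> + 1) / c" by auto
  then show False using assms[of "(\<bar>K\<bar> + 1) / c"] by linarith
qed

lemma absorbing_open_Times_ball:
  fixes V :: "'a::{real_vector,topological_space} set"
  assumes tvs: "tvs TYPE('a)" and V: "open V" "0 \<in> V" and "0 < \<delta>"
  shows "absorbing (V \<times> ball (0::real) \<delta>)"
  unfolding absorbing_def
proof
  fix q :: "'a \<times> real"
  obtain x r where q: "q = (x, r)" by (cases q)
  obtain e where e: "0 < e" "\<And>s. \<bar>s\<bar> < e \<Longrightarrow> s *\<^sub>R x \<in> V"
    using tvs_small_multiples_in_open[OF tvs V] by blast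
  define t where "t = min (e / 2) (\<delta> / (\<bar>r\<bar> + 1))"
  have t: "0 < t" "t \<le> \<delta> / (\<bar>r\<bar> + 1)" using e(1) \<open>0 < \<delta>\<close> by (auto simp: t_def)
  have "t *\<^sub>R x \<in> V" using e t by (auto simp: t_def)
  moreover have "t * \<bar>r\<bar> < \<delta>"
  proof -
    have "t * \<bar>r\<bar> \<le> \<delta> / (\<bar>r\<bar> + 1) * \<bar>r\<bar>" using t by (intro mult_right_mono) auto
    also have "\<dots> < \<delta>" using \<open>0 < \<delta>\<close> by (simp add: field_simps)
    finally show ?thesis .
  qed
  ultimately show "\<exists>t>0. t *\<^sub>R q \<in> V \<times> ball 0 \<delta>" using t(1) by (auto simp: q abs_mult)
qed

lemma dual_if_bounded_on_Times_ball:
  fixes \<phi> :: "'a::{real_vector,topological_space} \<times> real \<Rightarrow> real"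
  assumes tvs: "tvs TYPE('a)" and \<phi>: "linear \<phi>" and V: "open V" "0 \<in> V" and "0 < \<delta>"
    and le: "\<And>w. w \<in> V \<times> ball 0 \<delta> \<Longrightarrow> \<phi> w \<le> 1"
  shows "(\<lambda>x. \<phi> (x, 0)) \<in> dual"
proof -
  have lin: "linear (\<lambda>x. \<phi> (x, 0))" by (rule linear_on_prod_real(1)[OF \<phi>])
  moreover have "continuous_on UNIV (\<lambda>x. \<phi> (x, 0))"
  proof (rule tvs_linear_continuous_if_bounded[OF tvs lin])
    show "open (V \<inter> {v. 0 + (- 1) *\<^sub>R v \<in> V})"
      by (intro open_Int V(1) open_tvs_affine_vimage[OF tvs])
    show "0 \<in> V \<inter> {v. 0 + (- 1) *\<^sub>R v \<in> V}" using V(2) by simp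
    fix w assume "w \<in> V \<inter> {v. 0 + (- 1) *\<^sub>R v \<in> V}"
    then have "\<phi> (w, 0) \<le> 1" "\<phi> (- w, 0) \<le> 1" using \<open>0 < \<delta>\<close> le by auto
    then show "\<bar>\<phi> (w, 0)\<bar> \<le> 1" using linear_neg[OF lin, of w] by simp
  qed
  ultimately show ?thesis unfolding dual_def by blast
qed

section \<open>Closed proper convex functions and their affine minorants\<close>

context
  fixes f :: "'a::{real_vector,topological_space} \<Rightarrow> ereal"
  assumes f: "Gamma f"
begin

lemma Gamma_not_MInfty: "f x \<noteq> -\<infinity>"
  using f unfolding GammaF_def by simp

lemma Gamma_finite_point: obtains x a where "f x = ereal a"
proof -
  obtain x where "f x \<noteq> \<infinity>" using f unfolding GammaF_def by auto
  then show thesis using that Gamma_not_MInfty[of x] by (cases "f x") auto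
qed

lemma Gamma_convex:
  "0 < t \<Longrightarrow> t < 1 \<Longrightarrow> f (t *\<^sub>R x + (1 - t) *\<^sub>R y) \<le> ereal t * f x + ereal (1 - t) * f y"
  using f unfolding GammaF_def by simp

lemma closed_Gamma_sublevel: "closed {x. f x \<le> ereal a}"
  using f unfolding GammaF_def by simp

lemma Gamma_convex_bound:
  assumes "f x1 \<le> ereal r1" "f x2 \<le> ereal r2" "0 \<le> u" "0 \<le> v" "u + v = 1"
  shows "f (u *\<^sub>R x1 + v *\<^sub>R x2) \<le> ereal (u * r1 + v * r2)"
proof -
  consider "u = 0" | "v = 0" | "0 < u" "u < 1" "v = 1 - u" using assms(3-5) by fastforce
  then show ?thesis
  proof cases
    case 3
    have "f (u *\<^sub>R x1 + v *\<^sub>R x2) \<le> ereal u * f x1 + ereal (1 - u) * f x2"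
      using Gamma_convex[OF 3(1,2)] 3(3) by simp
    also have "\<dots> \<le> ereal u * ereal r1 + ereal (1 - u) * ereal r2"
      using 3 by (intro add_mono ereal_mult_left_mono assms(1,2)) auto
    finally show ?thesis using 3(3) by simp
  qed (use assms in auto)
qed

lemma convex_Gamma_epigraph: "convex {(x, r). f x \<le> ereal r}"
  by (rule convexI) (auto intro: Gamma_convex_bound)

lemma closed_Gamma_le_continuous:
  fixes g :: "'b::topological_space \<Rightarrow> 'a" and k :: "'b \<Rightarrow> real"
  assumes g: "continuous_on UNIV g" and k: "continuous_on UNIV k"
  shows "closed {u. f (g u) \<le> ereal (k u)}"
proof -
  have "- {u. f (g u) \<le> ereal (k u)} = (\<Union>z. g -` (- {x. f x \<le> ereal z}) \<inter> k -` {..<z})"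
  proof (intro set_eqI iffI)
    fix u assume "u \<in> - {u. f (g u) \<le> ereal (k u)}"
    then obtain z where "ereal (k u) < ereal z" "ereal z < f (g u)"
      using ereal_dense2 by (metis Compl_iff mem_Collect_eq not_le)
    then show "u \<in> (\<Union>z. g -` (- {x. f x \<le> ereal z}) \<inter> k -` {..<z})" by (auto simp: not_le)
  next
    fix u assume "u \<in> (\<Union>z. g -` (- {x. f x \<le> ereal z}) \<inter> k -` {..<z})"
    then obtain z where "ereal z < f (g u)" "k u < z" by (auto simp: not_le)
    then show "u \<in> - {u. f (g u) \<le> ereal (k u)}"
      by (metis ComplI ereal_less_eq(3) less_imp_le mem_Collect_eq not_le order_trans)
  qed
  moreover have "open (\<Union>z. g -` (- {x. f x \<le> ereal z}) \<inter> k -` {..<z})"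
    using closed_Gamma_sublevel
    by (intro open_UN ballI open_Int open_vimage[OF _ g] open_vimage[OF _ k]) auto
  ultimately show ?thesis by (metis closed_def double_complement)
qed

end

lemma point_not_in_epigraph_plus_box:
  fixes f :: "'b::real_vector \<Rightarrow> ereal"
  assumes "\<And>v. v \<in> V \<Longrightarrow> ereal (r0 + \<delta>) < f (x0 - v)"
  shows "(x0, r0) \<notin> {p + w | p w. p \<in> {(x, r). f x \<le> ereal r} \<and> w \<in> V \<times> ball 0 \<delta>}"
proof
  assume "(x0, r0) \<in> {p + w | p w. p \<in> {(x, r). f x \<le> ereal r} \<and> w \<in> V \<times> ball 0 \<delta>}"
  then obtain x r v s where "f x \<le> ereal r" "v \<in> V" "\<bar>s\<bar> < \<delta>" "(x0, r0) = (x, r) + (v, s)"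
    by (auto simp: dist_real_def)
  then have "f (x0 - v) \<le> ereal (r0 + \<delta>)" by (auto elim!: order_trans)
  with assms[OF \<open>v \<in> V\<close>] show False by simp
qed

context
  fixes f :: "'a::{real_vector,topological_space} \<Rightarrow> ereal"
  assumes tvs: "tvs TYPE('a)" and lc: "locally_convex TYPE('a)" and f: "Gamma f"
begin

lemma Gamma_above_on_neighbourhood:
  assumes "ereal z < f x0"
  obtains V where "open V" "convex V" "0 \<in> V" "\<And>v. v \<in> V \<Longrightarrow> ereal z < f (x0 - v)"
proof -
  have "open {v. x0 + (- 1) *\<^sub>R v \<in> - {x. f x \<le> ereal z}}"
    using closed_Gamma_sublevel[OF f]
      by (intro open_tvs_affine_vimage[OF tvs]) (simp add: open_Compl)
  moreover have "0 \<in> {v. x0 + (- 1) *\<^sub>R v \<in> - {x. f x \<le> ereal z}}" using assms by auto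
  ultimately obtain V where V: "open V" "convex V" "0 \<in> V"
    and sub: "V \<subseteq> {v. x0 + (- 1) *\<^sub>R v \<in> - {x. f x \<le> ereal z}}"
    using lc unfolding locally_convex_def by meson
  show thesis by (rule that[OF V]) (use sub in \<open>auto simp: subset_iff not_le\<close>)
qed

lemma Gamma_epigraph_separation:
  assumes below: "ereal r0 < f x0"
  obtains y \<beta> \<gamma> where "y \<in> dual" "\<beta> \<le> 0" "0 < \<gamma>"
    "\<And>x r. f x \<le> ereal r \<Longrightarrow> y x + \<beta> * r + \<gamma> \<le> y x0 + \<beta> * r0"
proof -
  obtain z where z: "ereal r0 < ereal z" "ereal z < f x0" using ereal_dense2[OF below] by blast
  define \<delta> where "\<delta> = z - r0"
  have \<delta>: "0 < \<delta>" using z by (simp add: \<delta>_def)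
  obtain V where V: "open V" "convex V" "0 \<in> V" and Vz: "\<And>v. v \<in> V \<Longrightarrow> ereal z < f (x0 - v)"
    by (rule Gamma_above_on_neighbourhood[OF z(2)]) auto
  define E where "E = {(x, r). f x \<le> ereal r}"
  define W where "W = V \<times> ball (0::real) \<delta>"
  obtain e0 a0 where e0: "f e0 = ereal a0" using Gamma_finite_point[OF f] by blast
  have "(x0, r0) \<notin> {p + w | p w. p \<in> E \<and> w \<in> W}"
    unfolding E_def W_def using Vz by (intro point_not_in_epigraph_plus_box) (simp add: \<delta>_def)
  moreover have "convex E" unfolding E_def by (rule convex_Gamma_epigraph[OF f])
  moreover have "(e0, a0) \<in> E" by (simp add: E_def e0)
  moreover have "convex W" unfolding W_def by (intro convex_Times V(2) convex_ball)
  moreover have "absorbing W" unfolding W_def by (rule absorbing_open_Times_ball[OF tvs V(1,3) \<delta>])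
  ultimately obtain \<phi> :: "'a \<times> real \<Rightarrow> real" and t where \<phi>: "linear \<phi>" "0 < t"
      "\<And>w. w \<in> W \<Longrightarrow> \<phi> w \<le> 1" "\<And>p. p \<in> E \<Longrightarrow> \<phi> p + t \<le> \<phi> (x0, r0)"
    using separation_convex_absorbing_gap[of E W "(x0, r0)"] by blast
  define y where "y x = \<phi> (x, 0)" for x
  define \<beta> where "\<beta> = \<phi> (0, 1)"
  have \<phi>_eq: "\<phi> (x, r) = y x + \<beta> * r" for x r
    unfolding y_def \<beta>_def by (rule linear_on_prod_real(2)[OF \<phi>(1)])
  have "y \<in> dual"
    unfolding y_def[abs_def] using \<phi>(3) unfolding W_def
      by (rule dual_if_bounded_on_Times_ball[OF tvs \<phi>(1) V(1,3) \<delta>])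
  moreover have gap: "y x + \<beta> * r + t \<le> y x0 + \<beta> * r0" if "f x \<le> ereal r" for x r
    using \<phi>(4)[of "(x, r)"] that by (simp add: E_def \<phi>_eq)
  moreover have "\<beta> \<le> 0"
  proof (rule nonpos_if_multiples_bounded)
    fix K :: real assume "0 < K"
    then have "y e0 + \<beta> * (a0 + K) + t \<le> y x0 + \<beta> * r0" using e0 by (intro gap) simp
    then show "K * \<beta> \<le> y x0 + \<beta> * r0 - t - y e0 - \<beta> * a0" by (simp add: algebra_simps)
  qed
  ultimately show thesis using that \<phi>(2) by blast
qed

lemma affine_minorant_of_separation:
  assumes y: "y \<in> dual" and \<beta>: "\<beta> < 0" and \<gamma>: "0 < \<gamma>"
    and gap: "\<And>x r. f x \<le> ereal r \<Longrightarrow> y x + \<beta> * r + \<gamma> \<le> y x0 + \<beta> * r0"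
  shows "\<exists>y'\<in>dual. \<exists>c. (\<forall>x. ereal (y' x - c) \<le> f x) \<and> r0 < y' x0 - c"
proof -
  define y' where "y' x = inverse (- \<beta>) * y x" for x
  define c where "c = (y x0 + \<beta> * r0 - \<gamma>) / (- \<beta>)"
  have scaled: "(- \<beta>) * y' x = y x" for x using \<beta> by (simp add: y'_def)
  have "ereal (y' x - c) \<le> f x" for x
  proof (cases "f x")
    case (real r)
    have "(- \<beta>) * (y' x - r) = y x + \<beta> * r" using scaled[of x] by (simp add: algebra_simps)
    also have "\<dots> \<le> (- \<beta>) * c" using gap[of x r] real \<beta> by (simp add: c_def)
    finally show ?thesis using real \<beta> by simp
  qed (use Gamma_not_MInfty[OF f] in auto)
  moreover have "y' \<in> dual" unfolding y'_def[abs_def] by (rule dual_scale[OF y])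
  moreover have "r0 < y' x0 - c"
  proof -
    have "(- \<beta>) * c = y x0 + \<beta> * r0 - \<gamma>" using \<beta> by (simp add: c_def)
    then have "(- \<beta>) * (y' x0 - c) = (- \<beta>) * r0 + \<gamma>"
      unfolding right_diff_distrib scaled by simp
    then show ?thesis using \<beta> \<gamma> by (smt (verit) mult_less_cancel_left_pos)
  qed
  ultimately show ?thesis by blast
qed

lemma Gamma_has_affine_minorant: "\<exists>y\<in>dual. \<exists>c. \<forall>x. ereal (y x - c) \<le> f x"
proof -
  obtain x0 a0 where a0: "f x0 = ereal a0" using Gamma_finite_point[OF f] by blast
  then obtain y \<beta> \<gamma> where y: "y \<in> dual" "\<beta> \<le> 0" "0 < \<gamma>"
    and gap: "\<And>x r. f x \<le> ereal r \<Longrightarrow> y x + \<beta> * r + \<gamma> \<le> y x0 + \<beta> * (a0 - 1)"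
    using Gamma_epigraph_separation[of "a0 - 1" x0] by auto
  have "\<beta> < 0" using gap[of x0 a0] a0 y(3) by (simp add: algebra_simps)
  then show ?thesis using affine_minorant_of_separation[OF y(1) _ y(3) gap] by blast
qed

theorem Gamma_affine_minorant_above:
  assumes below: "ereal r0 < f x0"
  shows "\<exists>y\<in>dual. \<exists>c. (\<forall>x. ereal (y x - c) \<le> f x) \<and> r0 < y x0 - c"
proof -
  obtain y \<beta> \<gamma> where y: "y \<in> dual" "\<beta> \<le> 0" "0 < \<gamma>"
    and gap: "\<And>x r. f x \<le> ereal r \<Longrightarrow> y x + \<beta> * r + \<gamma> \<le> y x0 + \<beta> * r0"
    using Gamma_epigraph_separation[OF below] by blast
  show ?thesis
  proof (cases "\<beta> = 0")
    case False
    then show ?thesis using affine_minorant_of_separation[OF y(1) _ y(3) gap] y(2) by simp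
  next
    case True
    \<comment> \<open>a vertical hyperplane: tilt an affine minorant by a large multiple of \<open>y\<close>\<close>
    obtain y1 c1 where y1: "y1 \<in> dual" "\<And>x. ereal (y1 x - c1) \<le> f x"
      using Gamma_has_affine_minorant by blast
    define k where "k = max 0 ((r0 - (y1 x0 - c1)) / \<gamma> + 1)"
    have k: "0 \<le> k" "r0 < y1 x0 - c1 + k * \<gamma>"
      using y(3) by (auto simp: k_def max_def field_simps)
    define y2 where "y2 x = y1 x + k * y x" for x
    define c2 where "c2 = c1 + k * (y x0 - \<gamma>)"
    have "ereal (y2 x - c2) \<le> f x" for x
    proof (cases "f x")
      case (real r)
      have "k * (y x - (y x0 - \<gamma>)) \<le> 0"
        using gap[of x r] real True k(1) by (simp add: mult_nonneg_nonpos)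
      then have "y2 x - c2 \<le> y1 x - c1" by (simp add: y2_def c2_def algebra_simps)
      then show ?thesis using y1(2)[of x] by (metis ereal_less_eq(3) order_trans)
    qed (use Gamma_not_MInfty[OF f] in auto)
    moreover have "y2 \<in> dual" unfolding y2_def[abs_def] by (intro dual_add dual_scale y1(1) y(1))
    moreover have "r0 < y2 x0 - c2" using k(2) by (simp add: y2_def c2_def algebra_simps)
    ultimately show ?thesis by blast
  qed
qed

end

section \<open>The recession function\<close>

definition slope :: "('a::real_vector \<Rightarrow> ereal) \<Rightarrow> 'a \<Rightarrow> 'a \<Rightarrow> real \<Rightarrow> ereal" where
  "slope f x u t = (f (x + t *\<^sub>R u) - f x) / ereal t"

lemma Lim_at_top_mono_ereal:
  fixes g :: "real \<Rightarrow> ereal"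
  assumes mono: "\<And>s t. 0 < s \<Longrightarrow> s \<le> t \<Longrightarrow> g s \<le> g t"
  shows "Lim at_top g = (SUP t\<in>{0<..}. g t)"
proof (rule tendsto_Lim)
  show "(g \<longlongrightarrow> (SUP t\<in>{0<..}. g t)) at_top"
  proof (rule order_tendstoI)
    fix a assume "a < (SUP t\<in>{0<..}. g t)"
    then obtain t0 where "0 < t0" "a < g t0" by (auto simp: less_SUP_iff)
    then have "\<forall>t\<ge>t0. a < g t" using mono by (meson less_le_trans)
    then show "\<forall>\<^sub>F t in at_top. a < g t" unfolding eventually_at_top_linorder by blast
  next
    fix a assume "(SUP t\<in>{0<..}. g t) < a"
    then have "\<forall>t\<ge>1. g t < a"
      by (metis SUP_upper greaterThan_iff le_less_trans less_le_trans zero_less_one)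
    then show "\<forall>\<^sub>F t in at_top. g t < a" unfolding eventually_at_top_linorder by blast
  qed
qed simp

lemma slope_le_iff:
  assumes "f x = ereal a" "0 < t"
  shows "slope f x u t \<le> ereal c \<longleftrightarrow> f (x + t *\<^sub>R u) \<le> ereal (a + t * c)"
  using assms unfolding slope_def
  by (cases "f (x + t *\<^sub>R u)") (auto simp: field_simps)

lemma SUP_slope_le_iff:
  assumes "f x = ereal a"
  shows "(SUP t\<in>{0<..}. slope f x u t) \<le> ereal c \<longleftrightarrow> (\<forall>t>0. f (x + t *\<^sub>R u) \<le> ereal (a + t * c))"
  using slope_le_iff[where f = f, OF assms] by (auto simp: SUP_le_iff)

context
  fixes f :: "'a::{real_vector,topological_space} \<Rightarrow> ereal"
  assumes tvs: "tvs TYPE('a)" and f: "Gamma f"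
begin

lemma slope_mono:
  assumes fx: "f x = ereal a" and st: "0 < s" "s \<le> t"
  shows "slope f x u s \<le> slope f x u t"
proof (cases "f (x + t *\<^sub>R u)")
  case (real b)
  \<comment> \<open>\<open>x + s u\<close> lies on the segment from \<open>x\<close> to \<open>x + t u\<close>\<close>
  have "f ((s / t) *\<^sub>R (x + t *\<^sub>R u) + (1 - s / t) *\<^sub>R x) \<le> ereal (s / t * b + (1 - s / t) * a)"
    using st real fx by (intro Gamma_convex_bound[OF f]) auto
  moreover have "(s / t) *\<^sub>R (x + t *\<^sub>R u) + (1 - s / t) *\<^sub>R x = x + s *\<^sub>R u"
    using st by (simp add: algebra_simps)
  moreover have "a + s * ((b - a) / t) = s / t * b + (1 - s / t) * a"
    using st by (simp add: field_simps)
  ultimately have "slope f x u s \<le> ereal ((b - a) / t)"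
    using slope_le_iff[where f = f, OF fx st(1)] by simp
  then show ?thesis using real fx st by (simp add: slope_def)
next
  case PInf
  then show ?thesis using fx st by (simp add: slope_def)
qed (use Gamma_not_MInfty[OF f] in auto)

lemma slope_not_MInfty: "f x = ereal a \<Longrightarrow> 0 < t \<Longrightarrow> slope f x u t \<noteq> -\<infinity>"
  using Gamma_not_MInfty[OF f, of "x + t *\<^sub>R u"] unfolding slope_def
  by (cases "f (x + t *\<^sub>R u)") auto

text \<open>Linear growth of \<open>f\<close> along a direction does not depend on the base point: the points
  \<open>(1 - l) x1 + l (x0 + (s / l) u)\<close> tend to \<open>x1 + s u\<close> as \<open>l \<rightarrow> 0\<close>, and the convexity bound
  at these points passes to the limit because \<open>f\<close> is lower semicontinuous.\<close>
lemma Gamma_growth_bound_transfer: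
  assumes f0: "f x0 = ereal a0" and f1: "f x1 = ereal a1"
    and bound: "\<And>t. 0 < t \<Longrightarrow> f (x0 + t *\<^sub>R u) \<le> ereal (a0 + t * \<alpha>)" and "0 < s"
  shows "f (x1 + s *\<^sub>R u) \<le> ereal (a1 + s * \<alpha>)"
proof -
  define p where "p l = (x1 + s *\<^sub>R u) + l *\<^sub>R (x0 - x1)" for l :: real
  define k where "k l = a1 + s * \<alpha> + l * (a0 - a1)" for l :: real
  have "closed {l. f (p l) \<le> ereal (k l)}"
    unfolding p_def[abs_def] k_def[abs_def]
    by (intro closed_Gamma_le_continuous[OF f] continuous_on_tvs_affine[OF tvs] continuous_intros)
  moreover have "f (p l) \<le> ereal (k l)" if l: "0 < l" "l < 1" for l
  proof -
    have "f ((1 - l) *\<^sub>R x1 + l *\<^sub>R (x0 + (s / l) *\<^sub>R u))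
        \<le> ereal ((1 - l) * a1 + l * (a0 + s / l * \<alpha>))"
      using l \<open>0 < s\<close> f1 bound[of "s / l"] by (intro Gamma_convex_bound[OF f]) auto
    moreover have "(1 - l) *\<^sub>R x1 + l *\<^sub>R (x0 + (s / l) *\<^sub>R u) = p l"
      using l by (simp add: p_def algebra_simps)
    moreover have "(1 - l) * a1 + l * (a0 + s / l * \<alpha>) = k l"
      using l by (simp add: k_def field_simps)
    ultimately show "f (p l) \<le> ereal (k l)" by simp
  qed
  then have "{0<..<1} \<subseteq> {l. f (p l) \<le> ereal (k l)}" by auto
  ultimately have "closure {0<..<1::real} \<subseteq> {l. f (p l) \<le> ereal (k l)}"
    by (rule closure_minimal[rotated])
  then have "f (p 0) \<le> ereal (k 0)" by (auto simp: subset_iff)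
  then show ?thesis by (simp add: p_def k_def)
qed

lemma SUP_slope_base_independent:
  assumes f0: "f x0 = ereal a0" and f1: "f x1 = ereal a1"
  shows "(SUP t\<in>{0<..}. slope f x1 u t) = (SUP t\<in>{0<..}. slope f x0 u t)"
proof -
  have le: "(SUP t\<in>{0<..}. slope f x1 u t) \<le> (SUP t\<in>{0<..}. slope f x0 u t)"
    if f0: "f x0 = ereal a0" and f1: "f x1 = ereal a1" for x0 x1 a0 a1
  proof (cases "SUP t\<in>{0<..}. slope f x0 u t")
    case (real \<alpha>)
    then have "\<forall>t>0. f (x0 + t *\<^sub>R u) \<le> ereal (a0 + t * \<alpha>)"
      using SUP_slope_le_iff[where f = f, OF f0] by (metis order_refl)
    then have "\<forall>s>0. f (x1 + s *\<^sub>R u) \<le> ereal (a1 + s * \<alpha>)"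
      using Gamma_growth_bound_transfer[OF f0 f1] by blast
    then show ?thesis using real SUP_slope_le_iff[where f = f, OF f1] by simp
  next
    case MInf
    then show ?thesis
      using SUP_upper[of 1 "{0<..}" "slope f x0 u"] slope_not_MInfty[OF f0, of 1 u] by simp
  qed simp
  show ?thesis using le[OF f0 f1] le[OF f1 f0] by (rule antisym)
qed

lemma rec_eq_SUP_slope:
  assumes fx: "f x = ereal a"
  shows "rec f u = (SUP t\<in>{0<..}. slope f x u t)"
proof -
  define v0 where "v0 = (SOME v. v \<in> (UNIV :: 'a set) \<and> \<bar>f v\<bar> \<noteq> \<infinity>)"
  have "\<bar>f v0\<bar> \<noteq> \<infinity>" unfolding v0_def by (rule someI2[of _ x]) (use fx in auto)
  then obtain b where b: "f v0 = ereal b" by (cases "f v0") auto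
  have "rec f u = Lim at_top (slope f v0 u)"
    unfolding recc_def v0_def slope_def[abs_def] Let_def by simp
  also have "\<dots> = (SUP t\<in>{0<..}. slope f v0 u t)"
    by (rule Lim_at_top_mono_ereal) (rule slope_mono[OF b])
  also have "\<dots> = (SUP t\<in>{0<..}. slope f x u t)" by (rule SUP_slope_base_independent[OF fx b])
  finally show ?thesis .
qed

lemma rec_le_iff:
  assumes "f x = ereal a"
  shows "rec f u \<le> ereal c \<longleftrightarrow> (\<forall>t>0. f (x + t *\<^sub>R u) \<le> ereal (a + t * c))"
  unfolding rec_eq_SUP_slope[OF assms] by (rule SUP_slope_le_iff[where f = f, OF assms])

lemma rec_not_MInfty: "rec f u \<noteq> -\<infinity>"
proof -
  obtain x a where a: "f x = ereal a" using Gamma_finite_point[OF f] .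
  show ?thesis
    using rec_eq_SUP_slope[OF a] SUP_upper[of 1 "{0<..}" "slope f x u"]
      slope_not_MInfty[OF a, of 1 u]
    by auto
qed

lemma rec_zero: "rec f 0 = 0"
proof -
  obtain x a where a: "f x = ereal a" using Gamma_finite_point[OF f] .
  have "rec f 0 \<le> 0" using rec_le_iff[OF a, of 0 0] a by (simp add: zero_ereal_def)
  then show ?thesis
    using rec_eq_SUP_slope[OF a, of 0] SUP_upper[of 1 "{0<..}" "slope f x 0"] a
    by (simp add: slope_def)
qed

lemma rec_add_le: "rec f (u + v) \<le> rec f u + rec f v"
proof (cases "rec f u = \<infinity> \<or> rec f v = \<infinity>")
  case True
  then show ?thesis using rec_not_MInfty[of u] rec_not_MInfty[of v] by auto
next
  case False
  then obtain \<alpha> \<beta> where ab: "rec f u = ereal \<alpha>" "rec f v = ereal \<beta>"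
    using rec_not_MInfty[of u] rec_not_MInfty[of v] by (cases "rec f u"; cases "rec f v") auto
  obtain x a where a: "f x = ereal a" using Gamma_finite_point[OF f] .
  have bound: "\<forall>t>0. f (x + t *\<^sub>R u) \<le> ereal (a + t * \<alpha>)" "\<forall>t>0. f (x + t *\<^sub>R v) \<le> ereal (a + t * \<beta>)"
    using rec_le_iff[OF a, of u \<alpha>] rec_le_iff[OF a, of v \<beta>] ab by simp_all
  have "f (x + t *\<^sub>R (u + v)) \<le> ereal (a + t * (\<alpha> + \<beta>))" if t: "0 < t" for t
  proof -
    have "f ((1 / 2) *\<^sub>R (x + (2 * t) *\<^sub>R u) + (1 / 2) *\<^sub>R (x + (2 * t) *\<^sub>R v))
        \<le> ereal ((1 / 2) * (a + (2 * t) * \<alpha>) + (1 / 2) * (a + (2 * t) * \<beta>))"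
      using bound[THEN spec, of "2 * t"] t by (intro Gamma_convex_bound[OF f]) auto
    moreover have "(1 / 2) *\<^sub>R (x + (2 * t) *\<^sub>R u) + (1 / 2) *\<^sub>R (x + (2 * t) *\<^sub>R v) = x + t *\<^sub>R (u + v)"
      by (simp add: algebra_simps flip: scaleR_add_left)
    ultimately show ?thesis by (simp add: algebra_simps)
  qed
  then show ?thesis using rec_le_iff[OF a] ab by simp
qed

lemma rec_scaleR:
  assumes "0 < s"
  shows "rec f (s *\<^sub>R u) = ereal s * rec f u"
proof -
  obtain x a where a: "f x = ereal a" using Gamma_finite_point[OF f] .
  have le: "rec f (s *\<^sub>R u) \<le> ereal s * rec f u" if "0 < s" for s u
  proof (cases "rec f u")
    case (real \<alpha>)
    have bound: "\<forall>t>0. f (x + t *\<^sub>R u) \<le> ereal (a + t * \<alpha>)"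
      using rec_le_iff[OF a, of u \<alpha>] real by simp
    have "f (x + t *\<^sub>R (s *\<^sub>R u)) \<le> ereal (a + t * (s * \<alpha>))" if "0 < t" for t
      using bound[rule_format, of "t * s"] \<open>0 < s\<close> that by (simp add: algebra_simps)
    then show ?thesis using rec_le_iff[OF a] real by simp
  qed (use rec_not_MInfty that in auto)
  have "ereal s * rec f u = ereal s * rec f (inverse s *\<^sub>R (s *\<^sub>R u))" using assms by simp
  also have "\<dots> \<le> ereal s * (ereal (inverse s) * rec f (s *\<^sub>R u))"
    using assms le[of "inverse s" "s *\<^sub>R u"] by (intro ereal_mult_left_mono) auto
  also have "\<dots> = (ereal s * ereal (inverse s)) * rec f (s *\<^sub>R u)" by (simp only: mult.assoc)
  also have "\<dots> = rec f (s *\<^sub>R u)" using assms by simp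
  finally show ?thesis using le[OF assms] by (rule antisym[rotated])
qed

lemma rec_add_neg_nonneg: "0 \<le> rec f u + rec f (- u)"
  using rec_add_le[of u "- u"] rec_zero by simp

lemma closed_rec_le:
  assumes g: "continuous_on UNIV g"
  shows "closed {u. rec f u \<le> ereal (g u)}"
proof -
  obtain x a where a: "f x = ereal a" using Gamma_finite_point[OF f] .
  have "{u. rec f u \<le> ereal (g u)} = (\<Inter>t\<in>{0<..}. {u. f (x + t *\<^sub>R u) \<le> ereal (a + t * g u)})"
    using rec_le_iff[OF a] by auto
  then show ?thesis
    by (simp only:) (intro closed_INT ballI closed_Gamma_le_continuous[OF f]
        continuous_on_tvs_affine[OF tvs] continuous_intros g)
qed

end

section \<open>The weak-star topology\<close>

instantiation "fun" :: (type, real_vector) real_vector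
begin

definition scaleR_fun :: "real \<Rightarrow> ('a \<Rightarrow> 'b) \<Rightarrow> 'a \<Rightarrow> 'b" where
  "scaleR_fun r g = (\<lambda>x. r *\<^sub>R g x)"

instance
  by standard (simp_all add: scaleR_fun_def fun_eq_iff scaleR_add_right scaleR_add_left)

end

lemma scaleR_fun_apply [simp]: "(r *\<^sub>R g) x = r *\<^sub>R g x"
  by (simp add: scaleR_fun_def)

lemma sum_fun_apply: "(\<Sum>i\<in>A. g i) x = (\<Sum>i\<in>A. g i x)"
  by (induction A rule: infinite_finite_induct) auto

lemma topspace_weakstar [simp]: "topspace weakstar = dual"
  unfolding weakstar_def by simp

lemma closedin_weakstar_eval_le: "closedin weakstar {y \<in> dual. y u \<le> c}"
proof -
  let ?P = "product_topology (\<lambda>_. euclideanreal) (UNIV :: 'a set)"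
  have "closedin ?P {y \<in> topspace ?P. y u \<in> {..c}}"
    by (rule closedin_continuous_map_preimage[OF continuous_map_product_projection]) auto
  then have "closedin ?P {y. y u \<le> c}" by simp
  moreover have "{y \<in> dual. y u \<le> c} = {y. y u \<le> c} \<inter> dual" by auto
  ultimately show ?thesis unfolding weakstar_def closedin_subtopology by blast
qed

lemma weakstar_closure_subset_dual: "weakstar closure_of S \<subseteq> dual"
  using closure_of_subset_topspace[of weakstar S] by simp

text \<open>Basic weak-star neighbourhoods are given by finitely many evaluations.\<close>
lemma weakstar_not_in_closure_finite_witness:
  assumes S: "S \<subseteq> dual" and y0: "y0 \<in> dual" and ncl: "y0 \<notin> weakstar closure_of S"
  obtains F \<epsilon> where "finite F" "0 < \<epsilon>" "\<And>s. s \<in> S \<Longrightarrow> \<exists>i\<in>F. \<epsilon> \<le> \<bar>s i - y0 i\<bar>"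
proof -
  obtain T where T: "y0 \<in> T" "openin weakstar T" "\<And>y. y \<in> S \<Longrightarrow> y \<notin> T"
    using ncl y0 unfolding in_closure_of by auto
  then obtain O' where O': "openin (product_topology (\<lambda>_. euclideanreal) UNIV) O'" "T = O' \<inter> dual"
    unfolding weakstar_def openin_subtopology by blast
  then obtain U where U: "finite {i. U i \<noteq> UNIV}" "\<And>i. open (U i)" "y0 \<in> Pi\<^sub>E UNIV U"
      "Pi\<^sub>E UNIV U \<subseteq> O'"
    using T(1) unfolding openin_product_topology_alt by auto
  define F where "F = {i. U i \<noteq> UNIV}"
  have "\<forall>i. \<exists>e>0. ball (y0 i) e \<subseteq> U i"
  proof
    fix i
    have "y0 i \<in> U i" using U(3) by auto
    then show "\<exists>e>0. ball (y0 i) e \<subseteq> U i" using U(2)[of i] open_contains_ball by blast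
  qed
  then obtain e where e: "\<And>i. 0 < e i" "\<And>i. ball (y0 i) (e i) \<subseteq> U i" by metis
  define \<epsilon> where "\<epsilon> = Min (insert 1 (e ` F))"
  have fin: "finite F" using U(1) unfolding F_def .
  have "0 < \<epsilon>" unfolding \<epsilon>_def using fin e(1) by (subst Min_gr_iff) auto
  have \<epsilon>_le: "\<epsilon> \<le> e i" if "i \<in> F" for i unfolding \<epsilon>_def using fin that by (intro Min_le) auto
  have "\<exists>i\<in>F. \<epsilon> \<le> \<bar>s i - y0 i\<bar>" if s: "s \<in> S" for s
  proof (rule ccontr)
    assume close: "\<not> (\<exists>i\<in>F. \<epsilon> \<le> \<bar>s i - y0 i\<bar>)"
    have "s i \<in> U i" for i
    proof (cases "i \<in> F")
      case True
      then have "dist (y0 i) (s i) < e i"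
        using close \<epsilon>_le[OF True] by (auto simp: dist_real_def abs_minus_commute)
      then show ?thesis using e(2)[of i] by auto
    next
      case False
      then show ?thesis by (simp add: F_def)
    qed
    then have "s \<in> T" using U(4) O'(2) S s by auto
    then show False using T(3) s by blast
  qed
  then show thesis using that[OF fin \<open>0 < \<epsilon>\<close>] by blast
qed

lemma convex_box: "convex {w :: 'a \<Rightarrow> real. \<forall>i\<in>F. \<bar>w i\<bar> < \<epsilon>}"
proof (rule convexI, clarify)
  fix p q :: "'a \<Rightarrow> real" and a b :: real and i
  assume "\<forall>i\<in>F. \<bar>p i\<bar> < \<epsilon>" "\<forall>i\<in>F. \<bar>q i\<bar> < \<epsilon>" "0 \<le> a" "0 \<le> b" "a + b = 1" "i \<in> F"
  then have "a * \<bar>p i\<bar> + b * \<bar>q i\<bar> < \<epsilon>" by (intro convex_bound_lt) auto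
  then show "\<bar>(a *\<^sub>R p + b *\<^sub>R q) i\<bar> < \<epsilon>"
    using \<open>0 \<le> a\<close> \<open>0 \<le> b\<close> abs_triangle_ineq[of "a * p i" "b * q i"] by (simp add: abs_mult)
qed

lemma absorbing_box:
  assumes F: "finite F" and "0 < \<epsilon>"
  shows "absorbing {w :: 'a \<Rightarrow> real. \<forall>i\<in>F. \<bar>w i\<bar> < \<epsilon>}"
  unfolding absorbing_def
proof
  fix w :: "'a \<Rightarrow> real"
  define M where "M = (\<Sum>i\<in>F. \<bar>w i\<bar>)"
  have M: "0 \<le> M" unfolding M_def by (simp add: sum_nonneg)
  define t where "t = \<epsilon> / (M + 1)"
  have t: "0 < t" "t * M < \<epsilon>" using \<open>0 < \<epsilon>\<close> M by (auto simp: t_def field_simps)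
  have "\<bar>t * w i\<bar> < \<epsilon>" if "i \<in> F" for i
  proof -
    have "\<bar>w i\<bar> \<le> M" unfolding M_def using F that by (intro member_le_sum) auto
    have "\<bar>t * w i\<bar> = t * \<bar>w i\<bar>" using t(1) by (simp add: abs_mult)
    also have "\<dots> \<le> t * M" using t(1) \<open>\<bar>w i\<bar> \<le> M\<close> by (intro mult_left_mono) auto
    also have "\<dots> < \<epsilon>" by (rule t(2))
    finally show ?thesis .
  qed
  then show "\<exists>t>0. t *\<^sub>R w \<in> {w. \<forall>i\<in>F. \<bar>w i\<bar> < \<epsilon>}" using t(1) by auto
qed

text \<open>A linear functional on \<open>X \<Rightarrow> \<real>\<close> that only depends on the values at the finitely many
  points of \<open>F\<close> is, on \<open>X*\<close>, an evaluation.\<close>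
lemma linear_restriction_eq_eval:
  assumes F: "finite F" and \<phi>: "linear \<phi>" and y: "linear y"
  shows "y (\<Sum>i\<in>F. \<phi> (\<lambda>j. if j = i then 1 else 0) *\<^sub>R i) = \<phi> (\<lambda>i. if i \<in> F then y i else 0)"
proof -
  define \<delta> :: "'a \<Rightarrow> 'a \<Rightarrow> real" where "\<delta> i = (\<lambda>j. if j = i then 1 else 0)" for i
  have "(\<lambda>i. if i \<in> F then y i else 0) = (\<Sum>i\<in>F. y i *\<^sub>R \<delta> i)"
    unfolding \<delta>_def by (auto simp: fun_eq_iff sum_fun_apply F if_distrib sum.delta cong: if_cong)
  then have "\<phi> (\<lambda>i. if i \<in> F then y i else 0) = (\<Sum>i\<in>F. y i * \<phi> (\<delta> i))"
    by (simp add: linear_sum[OF \<phi>] linear_scale[OF \<phi>])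
  also have "\<dots> = y (\<Sum>i\<in>F. \<phi> (\<delta> i) *\<^sub>R i)"
    by (simp add: linear_sum[OF y] linear_scale[OF y] mult.commute)
  finally show ?thesis by (simp add: \<delta>_def)
qed

text \<open>The dual of \<open>X*\<close> with the weak-star topology is \<open>X\<close>.\<close>
theorem weakstar_separation:
  fixes S :: "('a::{real_vector,topological_space} \<Rightarrow> real) set"
  assumes S: "S \<subseteq> dual" "convex S" "S \<noteq> {}" and y0: "y0 \<in> dual"
    and ncl: "y0 \<notin> weakstar closure_of S"
  obtains u \<gamma> where "0 < \<gamma>" "\<And>s. s \<in> S \<Longrightarrow> s u + \<gamma> \<le> y0 u"
proof -
  obtain F \<epsilon> where F: "finite F" "0 < \<epsilon>" and far: "\<And>s. s \<in> S \<Longrightarrow> \<exists>i\<in>F. \<epsilon> \<le> \<bar>s i - y0 i\<bar>"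
    by (rule weakstar_not_in_closure_finite_witness[OF S(1) y0 ncl]) auto
  define T :: "('a \<Rightarrow> real) \<Rightarrow> 'a \<Rightarrow> real" where "T y = (\<lambda>i. if i \<in> F then y i else 0)" for y
  define B :: "('a \<Rightarrow> real) set" where "B = {w. \<forall>i\<in>F. \<bar>w i\<bar> < \<epsilon>}"
  have "linear T" by (rule linearI) (auto simp: T_def fun_eq_iff)
  then have convex_TS: "convex (T ` S)" using S(2) by (rule convex_linear_image)
  have gap: "T y0 \<notin> {p + w | p w. p \<in> T ` S \<and> w \<in> B}"
  proof
    assume "T y0 \<in> {p + w | p w. p \<in> T ` S \<and> w \<in> B}"
    then obtain p w where p: "p \<in> T ` S" and w: "w \<in> B" and eq: "T y0 = p + w" by blast
    then obtain s where s: "s \<in> S" "p = T s" by blast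
    have "\<bar>y0 i - s i\<bar> < \<epsilon>" if i: "i \<in> F" for i
    proof -
      have "T y0 i = T s i + w i" using eq s(2) by simp
      then have "w i = y0 i - s i" using i by (simp add: T_def)
      then show ?thesis using w i unfolding B_def by force
    qed
    moreover obtain i where "i \<in> F" "\<epsilon> \<le> \<bar>s i - y0 i\<bar>" using far[OF s(1)] by blast
    ultimately show False by (force simp: abs_minus_commute)
  qed
  have ne: "T ` S \<noteq> {}" using S(3) by blast
  have B: "convex B" "absorbing B" unfolding B_def by (rule convex_box, rule absorbing_box[OF F])
  obtain \<phi> :: "('a \<Rightarrow> real) \<Rightarrow> real" and t where \<phi>: "linear \<phi>" "0 < t"
      "\<And>p. p \<in> T ` S \<Longrightarrow> \<phi> p + t \<le> \<phi> (T y0)"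
    by (rule separation_convex_absorbing_gap[OF convex_TS ne B gap]) auto
  define u where "u = (\<Sum>i\<in>F. \<phi> (\<lambda>j. if j = i then 1 else 0) *\<^sub>R i)"
  have eval: "y u = \<phi> (T y)" if "y \<in> dual" for y
    unfolding u_def T_def by (rule linear_restriction_eq_eval[OF F(1) \<phi>(1) dual_linear[OF that]])
  show thesis
  proof (rule that[OF \<phi>(2)])
    fix s assume "s \<in> S"
    then show "s u + t \<le> y0 u" using \<phi>(3)[of "T s"] eval[of s] eval[OF y0] S(1) by auto
  qed
qed

section \<open>The domain of the conjugate and its weak-star closure\<close>

lemma conj_ge: "ereal (y v) - f v \<le> conj f y"
  unfolding conj_def by (rule SUP_upper) simp

context
  fixes f :: "'a::{real_vector,topological_space} \<Rightarrow> ereal"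
  assumes tvs: "tvs TYPE('a)" and lc: "locally_convex TYPE('a)" and f: "Gamma f"
begin

lemma conj_eq_ereal:
  assumes "y \<in> domconj f"
  obtains \<gamma> where "conj f y = ereal \<gamma>"
proof -
  obtain x a where "f x = ereal a" using Gamma_finite_point[OF f] .
  then have "conj f y \<noteq> -\<infinity>" using conj_ge[of y x f] by auto
  moreover have "conj f y \<noteq> \<infinity>" using assms unfolding domconj_def by auto
  ultimately show thesis using that by (cases "conj f y") auto
qed

lemma conj_minorant:
  assumes "conj f y = ereal \<gamma>"
  shows "ereal (y v - \<gamma>) \<le> f v"
  using conj_ge[of y v f] assms Gamma_not_MInfty[OF f, of v] by (cases "f v") auto

lemma domconj_if_minorant:
  assumes "y \<in> dual" and "\<And>x. ereal (y x - c) \<le> f x"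
  shows "y \<in> domconj f"
proof -
  have "ereal (y x) - f x \<le> ereal c" for x
    using assms(2)[of x] Gamma_not_MInfty[OF f, of x] by (cases "f x") auto
  then have "conj f y \<le> ereal c" unfolding conj_def by (intro SUP_least) auto
  then show ?thesis unfolding domconj_def using assms(1) by auto
qed

lemma domconj_nonempty: "domconj f \<noteq> {}"
  using Gamma_has_affine_minorant[OF tvs lc f] domconj_if_minorant by blast

lemma convex_domconj: "convex (domconj f)"
proof (rule convexI)
  fix y1 y2 and a b :: real
  assume y: "y1 \<in> domconj f" "y2 \<in> domconj f" and ab: "0 \<le> a" "0 \<le> b" "a + b = 1"
  obtain c1 c2 where c: "conj f y1 = ereal c1" "conj f y2 = ereal c2"
    using conj_eq_ereal y by metis
  have minorant: "ereal ((a *\<^sub>R y1 + b *\<^sub>R y2) x - (a * c1 + b * c2)) \<le> f x" for x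
  proof (cases "f x")
    case (real r)
    have "y1 x - c1 \<le> r" "y2 x - c2 \<le> r"
      using conj_minorant[OF c(1), of x] conj_minorant[OF c(2), of x] real
      by simp_all
    then have "a * (y1 x - c1) + b * (y2 x - c2) \<le> a * r + b * r"
      using ab by (intro add_mono mult_left_mono) auto
    then show ?thesis using real ab(3) by (simp add: algebra_simps flip: distrib_right)
  qed (use Gamma_not_MInfty[OF f] in auto)
  have "(\<lambda>x. a * y1 x + b * y2 x) \<in> dual"
    using y unfolding domconj_def by (auto intro!: dual_add dual_scale)
  then have "a *\<^sub>R y1 + b *\<^sub>R y2 \<in> dual" by (simp add: plus_fun_def scaleR_fun_def)
  then show "a *\<^sub>R y1 + b *\<^sub>R y2 \<in> domconj f" using minorant by (rule domconj_if_minorant)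
qed

lemma domconj_le_rec:
  assumes y: "y \<in> domconj f"
  shows "ereal (y u) \<le> rec f u"
proof (cases "rec f u")
  case (real \<alpha>)
  obtain \<gamma> where \<gamma>: "conj f y = ereal \<gamma>" using conj_eq_ereal[OF y] .
  obtain x0 a0 where a0: "f x0 = ereal a0" using Gamma_finite_point[OF f] .
  have lin: "linear y" using y dual_linear unfolding domconj_def by blast
  \<comment> \<open>along the ray \<open>x0 + t u\<close>, \<open>y - \<gamma>\<close> stays below \<open>f\<close>, which grows at most like \<open>t \<alpha>\<close>\<close>
  have growth: "\<forall>t>0. f (x0 + t *\<^sub>R u) \<le> ereal (a0 + t * \<alpha>)"
    using rec_le_iff[OF tvs f a0, of u \<alpha>] real by simp
  have "t * (y u - \<alpha>) \<le> a0 - y x0 + \<gamma>" if t: "0 < t" for t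
  proof -
    have "f (x0 + t *\<^sub>R u) \<le> ereal (a0 + t * \<alpha>)" using growth t by blast
    moreover have "ereal (y (x0 + t *\<^sub>R u) - \<gamma>) \<le> f (x0 + t *\<^sub>R u)" by (rule conj_minorant[OF \<gamma>])
    ultimately have "y (x0 + t *\<^sub>R u) - \<gamma> \<le> a0 + t * \<alpha>" by (metis ereal_less_eq(3) order_trans)
    then show ?thesis by (simp add: linear_add[OF lin] linear_scale[OF lin] algebra_simps)
  qed
  then have "y u - \<alpha> \<le> 0" by (rule nonpos_if_multiples_bounded)
  then show ?thesis using real by simp
qed (use rec_not_MInfty[OF tvs f] in auto)

text \<open>Together with \<open>domconj_le_rec\<close>, this says that \<open>f\<^sub>\<infinity>\<close> is the support function of
  \<open>dom f*\<close>.\<close>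
lemma rec_le_if_domconj_le:
  assumes le: "\<And>y. y \<in> domconj f \<Longrightarrow> y u \<le> c"
  shows "rec f u \<le> ereal c"
proof -
  obtain x0 a0 where a0: "f x0 = ereal a0" using Gamma_finite_point[OF f] .
  have "f (x0 + t *\<^sub>R u) \<le> ereal (a0 + t * c)" if t: "0 < t" for t
  proof (rule ccontr)
    assume "\<not> f (x0 + t *\<^sub>R u) \<le> ereal (a0 + t * c)"
    then obtain y c' where y: "y \<in> dual" "\<And>x. ereal (y x - c') \<le> f x"
        "a0 + t * c < y (x0 + t *\<^sub>R u) - c'"
      using Gamma_affine_minorant_above[OF tvs lc f] by (metis not_le)
    have "y u \<le> c" using le domconj_if_minorant[OF y(1,2)] by blast
    then have "t * y u \<le> t * c" using t by simp
    moreover have "y x0 - c' \<le> a0" using y(2)[of x0] a0 by simp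
    ultimately have "y (x0 + t *\<^sub>R u) - c' \<le> a0 + t * c"
      using dual_linear[OF y(1)] by (simp add: linear_add linear_scale)
    then show False using y(3) by simp
  qed
  then show ?thesis using rec_le_iff[OF tvs f a0] by blast
qed

theorem weakstar_closure_domconj:
  "weakstar closure_of domconj f = {y \<in> dual. \<forall>u. ereal (y u) \<le> rec f u}"
proof (intro equalityI subsetI)
  fix y assume y: "y \<in> weakstar closure_of domconj f"
  have "ereal (y u) \<le> rec f u" for u
  proof (cases "rec f u")
    case (real \<alpha>)
    have "domconj f \<subseteq> {y \<in> dual. y u \<le> \<alpha>}"
      using domconj_le_rec[of _ u] real unfolding domconj_def by auto
    then have "weakstar closure_of domconj f \<subseteq> {y \<in> dual. y u \<le> \<alpha>}"
      by (rule closure_of_minimal[OF _ closedin_weakstar_eval_le])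
    then show ?thesis using y real by auto
  qed (use rec_not_MInfty[OF tvs f] in auto)
  then show "y \<in> {y \<in> dual. \<forall>u. ereal (y u) \<le> rec f u}"
    using y weakstar_closure_subset_dual by blast
next
  fix y assume y: "y \<in> {y \<in> dual. \<forall>u. ereal (y u) \<le> rec f u}"
  show "y \<in> weakstar closure_of domconj f"
  proof (rule ccontr)
    assume ncl: "y \<notin> weakstar closure_of domconj f"
    have "domconj f \<subseteq> dual" unfolding domconj_def by auto
    moreover have "y \<in> dual" using y by blast
    ultimately obtain u \<gamma> where "0 < \<gamma>" "\<And>s. s \<in> domconj f \<Longrightarrow> s u + \<gamma> \<le> y u"
      using weakstar_separation[OF _ convex_domconj domconj_nonempty _ ncl] by blast
    then have "rec f u \<le> ereal (y u - \<gamma>)" by (intro rec_le_if_domconj_le) force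
    with y have "ereal (y u) \<le> ereal (y u - \<gamma>)" by (blast intro: order_trans)
    then show False using \<open>0 < \<gamma>\<close> by simp
  qed
qed

end

section \<open>Quotients by a linear subspace\<close>

lemma topspace_qtop: "topspace (qtop L) = cosets L"
proof -
  have "proj L -` range (proj L) = UNIV" by auto
  then have "openin (qtop L) (cosets L)" unfolding openin_qtop cosets_def by simp
  moreover have "S \<subseteq> cosets L" if "openin (qtop L) S" for S using that unfolding openin_qtop
    by blast
  ultimately show ?thesis unfolding topspace_def by blast
qed

lemma closedin_qtop_iff: "closedin (qtop L) S \<longleftrightarrow> S \<subseteq> cosets L \<and> closed (proj L -` S)"
proof -
  have "proj L -` (cosets L - S) = - (proj L -` S)" by (auto simp: cosets_def)
  then show ?thesis by (simp add: closedin_def openin_qtop topspace_qtop closed_def)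
qed

context
  fixes L :: "'a::real_vector set"
  assumes L: "subspace L"
begin

lemma proj_eq_iff: "proj L x = proj L y \<longleftrightarrow> x - y \<in> L"
proof
  assume eq: "proj L x = proj L y"
  have "y + 0 \<in> proj L y" unfolding proj_def using subspace_0[OF L] by (rule imageI)
  then have "y \<in> proj L x" using eq by simp
  then obtain l where "l \<in> L" "y = x + l" unfolding proj_def by blast
  then show "x - y \<in> L" using subspace_neg[OF L] by simp
next
  assume d: "x - y \<in> L"
  show "proj L x = proj L y"
  proof (intro set_eqI iffI)
    fix z assume "z \<in> proj L x"
    then obtain l where "l \<in> L" "z = y + ((x - y) + l)" unfolding proj_def by auto
    then show "z \<in> proj L y" unfolding proj_def using subspace_add[OF L d] by blast
  next
    fix z assume "z \<in> proj L y"
    then obtain l where "l \<in> L" "z = x + (l - (x - y))" unfolding proj_def by auto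
    then show "z \<in> proj L x" unfolding proj_def using subspace_diff[OF L _ d] by blast
  qed
qed

lemma rep_proj_diff: "rep (proj L x) - x \<in> L"
proof -
  have "x + 0 \<in> proj L x" unfolding proj_def using subspace_0[OF L] by (rule imageI)
  then have "\<exists>y. y \<in> proj L x" by blast
  then have "rep (proj L x) \<in> proj L x" unfolding rep_def by (rule someI_ex)
  then obtain l where "l \<in> L" "rep (proj L x) = x + l" unfolding proj_def by blast
  then show ?thesis by simp
qed

lemma qscale_proj: "qscale L t (proj L x) = proj L (t *\<^sub>R x)"
  unfolding qscale_def
  by (rule proj_eq_iff[THEN iffD2])
    (use subspace_scale[OF L rep_proj_diff, of t] in \<open>simp only: scaleR_diff_right\<close>)

lemma qadd_proj: "qadd L (proj L x) (proj L y) = proj L (x + y)"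
  unfolding qadd_def
  by (rule proj_eq_iff[THEN iffD2])
    (use subspace_add[OF L rep_proj_diff rep_proj_diff, of x y] in \<open>simp only: add_diff_add\<close>)

end

section \<open>The quotient by the lineality space\<close>

lemma subspace_cone_Int_uminus:
  fixes P :: "'b::real_vector set"
  assumes "0 \<in> P" "\<And>u v. u \<in> P \<Longrightarrow> v \<in> P \<Longrightarrow> u + v \<in> P"
    "\<And>c u. 0 < c \<Longrightarrow> u \<in> P \<Longrightarrow> c *\<^sub>R u \<in> P"
  shows "subspace {u. u \<in> P \<and> - u \<in> P}"
  unfolding subspace_def
proof (intro conjI ballI allI)
  fix c :: real and u assume u: "u \<in> {u. u \<in> P \<and> - u \<in> P}"
  consider "c = 0" | "0 < c" | "0 < - c" by linarith
  then show "c *\<^sub>R u \<in> {u. u \<in> P \<and> - u \<in> P}"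
  proof cases
    case 1
    then show ?thesis using assms(1) by simp
  next
    case 2
    then show ?thesis using u assms(3)[of c u] assms(3)[of c "- u"] by simp
  next
    case 3
    then show ?thesis using u assms(3)[of "- c" u] assms(3)[of "- c" "- u"] by simp
  qed
next
  fix u v assume "u \<in> {u. u \<in> P \<and> - u \<in> P}" "v \<in> {u. u \<in> P \<and> - u \<in> P}"
  then show "u + v \<in> {u. u \<in> P \<and> - u \<in> P}" using assms(2)[of u v] assms(2)[of "- u" "- v"] by auto
qed (use assms(1) in auto)

lemma convex_cone_diff:
  fixes B :: "'b::real_vector set"
  assumes B: "convex B" "x \<in> B"
  shows "convex {t *\<^sub>R (c - x) | t c. 0 \<le> t \<and> c \<in> B}"
proof (rule convexI, clarify)
  fix a b t1 t2 :: real and c1 c2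
  assume ab: "0 \<le> a" "0 \<le> b" "a + b = 1" and t: "0 \<le> t1" "0 \<le> t2" and c: "c1 \<in> B" "c2 \<in> B"
  define T where "T = a * t1 + b * t2"
  show "\<exists>t c. a *\<^sub>R t1 *\<^sub>R (c1 - x) + b *\<^sub>R t2 *\<^sub>R (c2 - x) = t *\<^sub>R (c - x) \<and> 0 \<le> t \<and> c \<in> B"
  proof (cases "T = 0")
    case True
    then have "a * t1 = 0" "b * t2 = 0" using ab t unfolding T_def
      by (smt (verit) mult_nonneg_nonneg)+
    then have z: "a *\<^sub>R t1 *\<^sub>R (c1 - x) = 0" "b *\<^sub>R t2 *\<^sub>R (c2 - x) = 0"
      by (simp_all only: scaleR_scaleR scaleR_zero_left)
    have "a *\<^sub>R t1 *\<^sub>R (c1 - x) + b *\<^sub>R t2 *\<^sub>R (c2 - x) = 0 *\<^sub>R (x - x)" unfolding z by simp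
    then show ?thesis using B(2) by blast
  next
    case False
    moreover have "0 \<le> T" using ab t by (simp add: T_def)
    ultimately have T: "0 < T" by simp
    \<comment> \<open>a conic combination is a positive multiple of a convex combination\<close>
    define c where "c = (a * t1 / T) *\<^sub>R c1 + (b * t2 / T) *\<^sub>R c2"
    have "a * t1 / T + b * t2 / T = 1" using T by (simp add: T_def add_divide_distrib[symmetric])
    then have "c \<in> B" unfolding c_def using ab t T c by (intro convexD[OF B(1)]) auto
    moreover have "T *\<^sub>R c = (a * t1) *\<^sub>R c1 + (b * t2) *\<^sub>R c2"
      using T by (simp add: c_def scaleR_add_right)
    then have "a *\<^sub>R t1 *\<^sub>R (c1 - x) + b *\<^sub>R t2 *\<^sub>R (c2 - x) = T *\<^sub>R (c - x)"
      unfolding scaleR_diff_right by (simp add: T_def algebra_simps)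
    ultimately show ?thesis using T by (intro exI[of _ T] exI[of _ c]) simp
  qed
qed

context
  fixes f :: "'a::{real_vector,topological_space} \<Rightarrow> ereal"
  assumes tvs: "tvs TYPE('a)" and lc: "locally_convex TYPE('a)" and f: "Gamma f"
begin

lemma convex_weakstar_closure_domconj: "convex (weakstar closure_of domconj f)"
  unfolding weakstar_closure_domconj[OF tvs lc f]
proof (rule convexI)
  fix y1 y2 and a b :: real
  assume "y1 \<in> {y \<in> dual. \<forall>u. ereal (y u) \<le> rec f u}" "y2 \<in> {y \<in> dual. \<forall>u. ereal (y u) \<le> rec f u}"
  then have y: "y1 \<in> dual" "y2 \<in> dual" "\<And>u. ereal (y1 u) \<le> rec f u" "\<And>u. ereal (y2 u) \<le> rec f u"
    by auto
  assume ab: "0 \<le> a" "0 \<le> b" "a + b = 1"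
  have "(\<lambda>x. a * y1 x + b * y2 x) \<in> dual" using y by (intro dual_add dual_scale)
  then have "a *\<^sub>R y1 + b *\<^sub>R y2 \<in> dual" by (simp add: plus_fun_def scaleR_fun_def)
  moreover have "ereal ((a *\<^sub>R y1 + b *\<^sub>R y2) u) \<le> rec f u" for u
  proof (cases "rec f u")
    case (real r)
    then have "a * y1 u + b * y2 u \<le> a * r + b * r"
      using y(3,4)[of u] ab by (intro add_mono mult_left_mono) auto
    then show ?thesis using real ab(3) by (simp flip: distrib_right)
  qed (use rec_not_MInfty[OF tvs f] in auto)
  ultimately show "a *\<^sub>R y1 + b *\<^sub>R y2 \<in> {y \<in> dual. \<forall>u. ereal (y u) \<le> rec f u}" by blast
qed

lemma lineality_eq_if_weakstar_closure_domconj: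
  assumes "y1 \<in> weakstar closure_of domconj f" "y2 \<in> weakstar closure_of domconj f"
  shows "{u. rec f u = ereal (y1 u) \<and> rec f (- u) = ereal (- y1 u)}
       = {u. rec f u = ereal (y2 u) \<and> rec f (- u) = ereal (- y2 u)}"
proof -
  have sub: "{u. rec f u = ereal (y1 u) \<and> rec f (- u) = ereal (- y1 u)}
           \<subseteq> {u. rec f u = ereal (y2 u) \<and> rec f (- u) = ereal (- y2 u)}"
    if y: "y1 \<in> weakstar closure_of domconj f" "y2 \<in> weakstar closure_of domconj f" for y1 y2
  proof clarify
    fix u assume u: "rec f u = ereal (y1 u)" "rec f (- u) = ereal (- y1 u)"
    have "y2 \<in> dual" "\<And>v. ereal (y2 v) \<le> rec f v"
      using y(2) unfolding weakstar_closure_domconj[OF tvs lc f] by auto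
    then have "y2 u \<le> y1 u" "- y2 u \<le> - y1 u"
      using u linear_neg[OF dual_linear[OF \<open>y2 \<in> dual\<close>], of u] by (metis ereal_less_eq(3))+
    then show "rec f u = ereal (y2 u) \<and> rec f (- u) = ereal (- y2 u)" using u by simp
  qed
  show ?thesis using sub[OF assms] sub[OF assms(2,1)] by (rule antisym)
qed

lemma Gamma_diff_dual:
  assumes xs: "xs \<in> dual"
  shows "Gamma (\<lambda>x. f x - ereal (xs x))"
  unfolding GammaF_def
proof (intro conjI ballI allI impI)
  show "f x - ereal (xs x) \<noteq> - \<infinity>" for x using Gamma_not_MInfty[OF f, of x] by (cases "f x") auto
  obtain x a where "f x = ereal a" using Gamma_finite_point[OF f] .
  then show "\<exists>x\<in>UNIV. f x - ereal (xs x) \<noteq> \<infinity>" by (intro bexI[of _ x]) auto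
  have "closed {x. f x \<le> ereal (a + xs x)}" for a
    using dual_continuous[OF xs] by (intro closed_Gamma_le_continuous[OF f] continuous_intros) auto
  moreover have "{x. f x - ereal (xs x) \<le> ereal a} = {x. f x \<le> ereal (a + xs x)}" for a
    using Gamma_not_MInfty[OF f] by (auto simp: ereal_minus_le_iff)
  ultimately show "closedin euclidean {x \<in> UNIV. f x - ereal (xs x) \<le> ereal a}" for a by simp
next
  fix x y and t :: real assume t: "0 < t \<and> t < 1"
  have lin: "xs (t *\<^sub>R x + (1 - t) *\<^sub>R y) = t * xs x + (1 - t) * xs y"
    using dual_linear[OF xs] by (simp add: linear_add linear_scale)
  show "f (t *\<^sub>R x + (1 - t) *\<^sub>R y) - ereal (xs (t *\<^sub>R x + (1 - t) *\<^sub>R y))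
      \<le> ereal t * (f x - ereal (xs x)) + ereal (1 - t) * (f y - ereal (xs y))"
  proof (cases "f x = \<infinity> \<or> f y = \<infinity>")
    case True
    have "ereal t * (f x - ereal (xs x)) + ereal (1 - t) * (f y - ereal (xs y)) = \<infinity>"
      using True t Gamma_not_MInfty[OF f, of x] Gamma_not_MInfty[OF f, of y]
        by (cases "f x"; cases "f y") auto
    then show ?thesis by (simp only:) simp
  next
    case False
    then obtain a b where ab: "f x = ereal a" "f y = ereal b"
      using Gamma_not_MInfty[OF f, of x] Gamma_not_MInfty[OF f, of y]
        by (cases "f x"; cases "f y") auto
    then have "f (t *\<^sub>R x + (1 - t) *\<^sub>R y) \<le> ereal (t * a + (1 - t) * b)"
      using Gamma_convex[OF f, of t x y] t by simp
    then show ?thesis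
      using ab lin Gamma_not_MInfty[OF f, of "t *\<^sub>R x + (1 - t) *\<^sub>R y"]
      by (cases "f (t *\<^sub>R x + (1 - t) *\<^sub>R y)") (auto simp: algebra_simps)
  qed
qed

end

lemma ereal_minus_eq_0_iff: "x - ereal c = 0 \<longleftrightarrow> x = ereal c"
  by (cases x) auto

lemma ereal_minus_nonneg_iff: "0 \<le> x - ereal c \<longleftrightarrow> ereal c \<le> x"
  by (cases x) auto

locale lineality_quotient =
  fixes f :: "'a::{real_vector,topological_space} \<Rightarrow> ereal" and xs :: "'a \<Rightarrow> real" and L :: "'a set"
  assumes tvs: "tvs TYPE('a)" and lc: "locally_convex TYPE('a)" and f: "Gamma f"
    and xs: "xs \<in> dual"
    and L_def: "L = {u. rec f u = ereal (xs u) \<and> rec f (- u) = ereal (- xs u)}"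
begin

abbreviation h :: "'a set \<Rightarrow> ereal" where
  "h \<equiv> hq f xs L"

abbreviation rec_h :: "'a set \<Rightarrow> ereal" where
  "rec_h \<equiv> recc (qadd L) (qscale L) (cosets L) h"

text \<open>The cone \<open>[f\<^sub>\<infinity> \<le> x*]\<close>; \<open>L\<close> is its lineality space.\<close>
abbreviation rec_le_xs :: "'a set" where
  "rec_le_xs \<equiv> {u. rec f u \<le> ereal (xs u)}"

lemma xs_linear: "linear xs"
  using dual_linear[OF xs] .

lemma mem_L_iff: "u \<in> L \<longleftrightarrow> u \<in> rec_le_xs \<and> - u \<in> rec_le_xs"
proof
  assume "u \<in> rec_le_xs \<and> - u \<in> rec_le_xs"
  moreover have "0 \<le> rec f u + rec f (- u)" by (rule rec_add_neg_nonneg[OF tvs f])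
  moreover have "xs (- u) = - xs u" using linear_neg[OF xs_linear] .
  ultimately show "u \<in> L"
    unfolding L_def using rec_not_MInfty[OF tvs f, of u] rec_not_MInfty[OF tvs f, of "- u"]
    by (cases "rec f u"; cases "rec f (- u)") auto
qed (simp add: L_def linear_neg[OF xs_linear])

lemma subspace_L: "subspace L"
proof -
  have "subspace {u. u \<in> rec_le_xs \<and> - u \<in> rec_le_xs}"
  proof (rule subspace_cone_Int_uminus)
    show "0 \<in> rec_le_xs" using rec_zero[OF tvs f] linear_0[OF xs_linear] by simp
    show "u + v \<in> rec_le_xs" if "u \<in> rec_le_xs" "v \<in> rec_le_xs" for u v
    proof -
      have "rec f (u + v) \<le> rec f u + rec f v" by (rule rec_add_le[OF tvs f])
      also have "\<dots> \<le> ereal (xs u) + ereal (xs v)" using that by (intro add_mono) auto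
      finally show ?thesis by (simp add: linear_add[OF xs_linear])
    qed
    show "c *\<^sub>R u \<in> rec_le_xs" if "0 < c" "u \<in> rec_le_xs" for c u
    proof -
      have "rec f (c *\<^sub>R u) = ereal c * rec f u" by (rule rec_scaleR[OF tvs f that(1)])
      also have "\<dots> \<le> ereal c * ereal (xs u)" using that by (intro ereal_mult_left_mono) auto
      finally show ?thesis by (simp add: linear_scale[OF xs_linear])
    qed
  qed
  moreover have "L = {u. u \<in> rec_le_xs \<and> - u \<in> rec_le_xs}" using mem_L_iff by blast
  ultimately show ?thesis by simp
qed

lemma closed_L: "closed L"
proof -
  have P: "closed rec_le_xs" by (rule closed_rec_le[OF tvs f dual_continuous[OF xs]])
  have "closed ((\<lambda>x. 0 + (- 1) *\<^sub>R x) -` rec_le_xs)"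
    by (intro closed_vimage[OF P] continuous_on_tvs_affine[OF tvs] continuous_intros)
  moreover have "L = rec_le_xs \<inter> (\<lambda>x. 0 + (- 1) *\<^sub>R x) -` rec_le_xs"
    using mem_L_iff by auto
  ultimately show ?thesis using P by (simp add: closed_Int)
qed

lemma f_add_L:
  assumes l: "l \<in> L"
  shows "f (x + l) = f x + ereal (xs l)"
proof -
  have le: "f (x + l) \<le> f x + ereal (xs l)" if "l \<in> L" for x l
  proof (cases "f x")
    case (real a)
    have "rec f l \<le> ereal (xs l)" using that by (simp add: L_def)
    then have "\<forall>t>0. f (x + t *\<^sub>R l) \<le> ereal (a + t * xs l)" using rec_le_iff[OF tvs f real] by blast
    then show ?thesis using real by (metis zero_less_one mult_1 scaleR_one plus_ereal.simps(1))
  qed (use Gamma_not_MInfty[OF f] in auto)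
  have "f x = f ((x + l) + - l)" by simp
  also have "\<dots> \<le> f (x + l) + ereal (xs (- l))"
    using le subspace_neg[OF subspace_L l] by blast
  also have "\<dots> = f (x + l) - ereal (xs l)"
    using linear_neg[OF xs_linear, of l] by (simp add: minus_ereal_def)
  finally have "f x + ereal (xs l) \<le> f (x + l)" by (simp add: ereal_le_minus)
  then show ?thesis using le[OF l] by (rule antisym[rotated])
qed

lemma hq_proj: "h (proj L x) = f x - ereal (xs x)"
proof -
  define l where "l = rep (proj L x) - x"
  have "l \<in> L" unfolding l_def by (rule rep_proj_diff[OF subspace_L])
  then have "f (x + l) - ereal (xs (x + l)) = (f x + ereal (xs l)) - ereal (xs x + xs l)"
    by (simp add: f_add_L linear_add[OF xs_linear])
  also have "\<dots> = f x - ereal (xs x)"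
    using Gamma_not_MInfty[OF f, of x] by (cases "f x") auto
  finally show ?thesis by (simp add: hq_def l_def)
qed

lemma f_eq_hq: "f x = h (proj L x) + ereal (xs x)"
  unfolding hq_proj using Gamma_not_MInfty[OF f, of x] by (cases "f x") auto

lemma proj_in_cosets: "proj L x \<in> cosets L"
  unfolding cosets_def by blast

lemma cosets_cases:
  assumes "A \<in> cosets L"
  obtains x where "A = proj L x"
  using assms unfolding cosets_def by blast

lemma Gamma_hq: "GammaF (qtop L) (qadd L) (qscale L) (cosets L) h"
proof -
  let ?g = "\<lambda>x. f x - ereal (xs x)"
  have g: "Gamma ?g" by (rule Gamma_diff_dual[OF tvs lc f xs])
  have "h A \<noteq> - \<infinity>" if "A \<in> cosets L" for A
    using that Gamma_not_MInfty[OF g] by (auto simp: hq_proj elim: cosets_cases)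
  moreover obtain x a where "?g x = ereal a" using Gamma_finite_point[OF g] .
  then have "\<exists>A\<in>cosets L. h A \<noteq> \<infinity>" by (intro bexI[of _ "proj L x"]) (auto simp: hq_proj cosets_def)
  moreover have
    "h (qadd L (qscale L t A) (qscale L (1 - t) B)) \<le> ereal t * h A + ereal (1 - t) * h B"
    if AB: "A \<in> cosets L" "B \<in> cosets L" and t: "0 < t" "t < 1" for A B t
  proof -
    obtain x y where "A = proj L x" "B = proj L y" using AB by (auto elim!: cosets_cases)
    then show ?thesis
      using Gamma_convex[OF g t, of x y]
      by (simp add: hq_proj qadd_proj[OF subspace_L] qscale_proj[OF subspace_L])
  qed
  moreover have "closedin (qtop L) {A \<in> cosets L. h A \<le> ereal a}" for a
  proof -
    have "proj L -` {A \<in> cosets L. h A \<le> ereal a} = {x. ?g x \<le> ereal a}"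
      by (auto simp: hq_proj cosets_def)
    then show ?thesis unfolding closedin_qtop_iff using closed_Gamma_sublevel[OF g] by auto
  qed
  ultimately show ?thesis unfolding GammaF_def by blast
qed

lemma rec_h_proj: "rec_h (proj L u) = rec f u - ereal (xs u)"
proof -
  define A0 where "A0 = (SOME A. A \<in> cosets L \<and> \<bar>h A\<bar> \<noteq> \<infinity>)"
  obtain x a where "f x = ereal a" using Gamma_finite_point[OF f] .
  then have "proj L x \<in> cosets L \<and> \<bar>h (proj L x)\<bar> \<noteq> \<infinity>" by (simp add: hq_proj cosets_def)
  then have "A0 \<in> cosets L \<and> \<bar>h A0\<bar> \<noteq> \<infinity>" unfolding A0_def by (rule someI)
  then obtain w where w: "A0 = proj L w" "\<bar>f w - ereal (xs w)\<bar> \<noteq> \<infinity>"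
    by (auto simp: hq_proj elim: cosets_cases)
  then obtain b where b: "f w = ereal b" by (cases "f w") auto
  define g where "g t = (h (qadd L A0 (qscale L t (proj L u))) - h A0) / ereal t" for t
  have g: "g t = slope f w u t - ereal (xs u)" if "0 < t" for t
  proof -
    have "g t = ((f (w + t *\<^sub>R u) - ereal (xs w + t * xs u)) - ereal (b - xs w)) / ereal t"
      unfolding g_def w(1) using b
      by (simp add: qscale_proj[OF subspace_L] qadd_proj[OF subspace_L] hq_proj
          linear_add[OF xs_linear]
          linear_scale[OF xs_linear])
    also have "\<dots> = slope f w u t - ereal (xs u)"
      unfolding slope_def b using that by (cases "f (w + t *\<^sub>R u)") (auto simp: field_simps)
    finally show ?thesis .
  qed
  have "rec_h (proj L u) = Lim at_top g"
    unfolding recc_def Let_def g_def A0_def ..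
  also have "\<dots> = (SUP t\<in>{0<..}. g t)"
    using slope_mono[OF tvs f b] g by (intro Lim_at_top_mono_ereal) (simp add: ereal_minus_mono)
  also have "\<dots> = (SUP t\<in>{0<..}. slope f w u t - ereal (xs u))" using g by (intro SUP_cong) auto
  also have "\<dots> = (SUP t\<in>{0<..}. slope f w u t) - ereal (xs u)" by (rule SUP_ereal_minus_left) auto
  also have "\<dots> = rec f u - ereal (xs u)" using rec_eq_SUP_slope[OF tvs f b] by simp
  finally show ?thesis .
qed

lemma rec_h_proj_le_zero_iff: "rec_h (proj L u) \<le> 0 \<longleftrightarrow> u \<in> rec_le_xs"
  unfolding rec_h_proj by (cases "rec f u") auto

lemma rec_h_lineality:
  "{proj L u | u. rec_h (proj L u) = 0 \<and> rec_h (proj L (- u)) = 0} = {proj L 0}"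
proof -
  have "rec_h (proj L u) = 0 \<and> rec_h (proj L (- u)) = 0 \<longleftrightarrow>
      rec f u = ereal (xs u) \<and> rec f (- u) = ereal (xs (- u))" for u
    unfolding rec_h_proj by (simp add: ereal_minus_eq_0_iff)
  also have "\<dots> u \<longleftrightarrow> u \<in> L" for u by (simp add: L_def linear_neg[OF xs_linear])
  finally show ?thesis using proj_eq_iff[OF subspace_L] subspace_0[OF subspace_L] by fastforce
qed

lemma rec_h_nonneg_iff:
  "(\<forall>A\<in>cosets L. 0 \<le> rec_h A) \<longleftrightarrow> xs \<in> weakstar closure_of domconj f"
proof -
  have "(\<forall>A\<in>cosets L. 0 \<le> rec_h A) \<longleftrightarrow> (\<forall>u. 0 \<le> rec_h (proj L u))"
    using proj_in_cosets by (auto elim!: cosets_cases)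
  also have "\<dots> \<longleftrightarrow> (\<forall>u. ereal (xs u) \<le> rec f u)" by (simp add: rec_h_proj ereal_minus_nonneg_iff)
  finally show ?thesis unfolding weakstar_closure_domconj[OF tvs lc f] using xs by blast
qed

lemma L_eq_Lf:
  assumes xB: "xs \<in> weakstar closure_of domconj f"
  shows "L = Lf f"
proof -
  have "(SOME y. y \<in> weakstar closure_of domconj f) \<in> weakstar closure_of domconj f"
    using xB by (rule someI[where P = "\<lambda>y. y \<in> weakstar closure_of domconj f"])
  then show ?thesis
    unfolding Lf_def Let_def L_def
      by (rule lineality_eq_if_weakstar_closure_domconj[OF tvs lc f xB])
qed

lemma rec_le_xs_eq:
  assumes "xs \<in> weakstar closure_of domconj f"
  shows "rec_le_xs = {u. rec f u = ereal (xs u)}"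
  using assms unfolding weakstar_closure_domconj[OF tvs lc f] by (auto intro: antisym)

lemma rec_h_le_zero_iff:
  "{A \<in> cosets L. rec_h A \<le> 0} = {proj L 0} \<longleftrightarrow> (\<forall>u\<in>rec_le_xs. - u \<in> rec_le_xs)"
proof
  assume eq: "{A \<in> cosets L. rec_h A \<le> 0} = {proj L 0}"
  show "\<forall>u\<in>rec_le_xs. - u \<in> rec_le_xs"
  proof
    fix u assume "u \<in> rec_le_xs"
    then have "proj L u \<in> {A \<in> cosets L. rec_h A \<le> 0}"
      using rec_h_proj_le_zero_iff proj_in_cosets by blast
    then have "u \<in> L" using eq proj_eq_iff[OF subspace_L] by simp
    then show "- u \<in> rec_le_xs" using mem_L_iff by blast
  qed
next
  assume sym: "\<forall>u\<in>rec_le_xs. - u \<in> rec_le_xs"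
  have "proj L u = proj L 0 \<longleftrightarrow> u \<in> rec_le_xs" for u
    using sym mem_L_iff proj_eq_iff[OF subspace_L, of u 0] by auto
  then show "{A \<in> cosets L. rec_h A \<le> 0} = {proj L 0}"
    using rec_h_proj_le_zero_iff proj_in_cosets by (auto elim!: cosets_cases)
qed

lemma symmetric_iff_L_eq: "(\<forall>u\<in>rec_le_xs. - u \<in> rec_le_xs) \<longleftrightarrow> L = rec_le_xs"
  using mem_L_iff by blast

text \<open>\<open>B_cone\<close> is the cone \<open>\<real>\<^sub>+(B - x*)\<close> of the definition of \<open>qri B\<close>, for \<open>B\<close> the
  weak-star closure of \<open>dom f*\<close>; its closure turns out to be the polar cone of \<open>[f\<^sub>\<infinity> \<le> x*]\<close>.\<close>
abbreviation B_cone :: "('a \<Rightarrow> real) set" where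
  "B_cone \<equiv> {\<lambda>x. t * (c x - xs x) | t c. 0 \<le> t \<and> c \<in> weakstar closure_of domconj f}"

abbreviation rec_le_polar :: "('a \<Rightarrow> real) set" where
  "rec_le_polar \<equiv> {z \<in> dual. \<forall>u\<in>rec_le_xs. z u \<le> 0}"

lemma B_cone_subset_dual: "B_cone \<subseteq> dual"
  using xs weakstar_closure_subset_dual by (auto intro!: dual_scale dual_diff)

lemma weakstar_closure_B_cone_subset_polar: "weakstar closure_of B_cone \<subseteq> rec_le_polar"
proof (rule closure_of_minimal)
  show "B_cone \<subseteq> rec_le_polar"
  proof
    fix d assume "d \<in> B_cone"
    then obtain t c
      where d: "d = (\<lambda>x. t * (c x - xs x))" "0 \<le> t" "c \<in> weakstar closure_of domconj f"
      by blast
    have "t * (c u - xs u) \<le> 0" if "rec f u \<le> ereal (xs u)" for u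
    proof -
      have "ereal (c u) \<le> rec f u" using d(3) unfolding weakstar_closure_domconj[OF tvs lc f]
        by blast
      then have "c u - xs u \<le> 0" using that by (metis diff_le_0_iff_le ereal_less_eq(3) order_trans)
      then show ?thesis using d(2) by (simp add: mult_nonneg_nonpos)
    qed
    then show "d \<in> rec_le_polar" using B_cone_subset_dual \<open>d \<in> B_cone\<close> d(1) by auto
  qed
  have "rec_le_polar = (\<Inter>u\<in>rec_le_xs. {z \<in> dual. z u \<le> 0})" "rec_le_xs \<noteq> {}"
    using mem_L_iff subspace_0[OF subspace_L] by auto
  then show "closedin weakstar rec_le_polar"
    by (auto intro!: closedin_Inter simp: closedin_weakstar_eval_le)
qed

lemma polar_subset_weakstar_closure_B_cone:
  assumes xB: "xs \<in> weakstar closure_of domconj f"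
  shows "rec_le_polar \<subseteq> weakstar closure_of B_cone"
proof
  fix z assume z: "z \<in> rec_le_polar"
  show "z \<in> weakstar closure_of B_cone"
  proof (rule ccontr)
    assume ncl: "z \<notin> weakstar closure_of B_cone"
    have "(\<lambda>x. t * (c x - xs x)) = t *\<^sub>R (c - xs)" for t c by (simp add: fun_eq_iff)
    then have "convex B_cone"
      using convex_cone_diff[OF convex_weakstar_closure_domconj[OF tvs lc f] xB] by simp
    moreover have zero: "(\<lambda>x. 0 * (xs x - xs x)) \<in> B_cone" using xB by blast
    moreover have "B_cone \<noteq> {}" using zero by blast
    moreover have "z \<in> dual" using z by blast
    ultimately obtain u \<gamma> where \<gamma>: "0 < \<gamma>" and sep: "\<And>d. d \<in> B_cone \<Longrightarrow> d u + \<gamma> \<le> z u"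
      using weakstar_separation[OF B_cone_subset_dual _ _ _ ncl] by blast
    \<comment> \<open>\<open>B_cone\<close> contains all multiples of \<open>c - x*\<close> for \<open>c \<in> dom f*\<close>, so \<open>u \<in> [f\<^sub>\<infinity> \<le> x*]\<close>\<close>
    have "c u \<le> xs u" if "c \<in> domconj f" for c
    proof -
      have "domconj f \<subseteq> weakstar closure_of domconj f"
        by (rule closure_of_subset) (auto simp: domconj_def)
      then have "(\<lambda>x. t * (c x - xs x)) \<in> B_cone" if "0 < t" for t
        using \<open>c \<in> domconj f\<close> that less_imp_le by blast
      then have "t * (c u - xs u) \<le> z u - \<gamma>" if "0 < t" for t using sep that by fastforce
      then have "c u - xs u \<le> 0" by (rule nonpos_if_multiples_bounded)
      then show ?thesis by simp
    qed
    then have "z u \<le> 0" using z rec_le_if_domconj_le[OF tvs lc f] by blast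
    moreover have "\<gamma> \<le> z u" using sep[OF zero] by simp
    ultimately show False using \<gamma> by simp
  qed
qed

lemma weakstar_closure_B_cone_eq_polar:
  assumes "xs \<in> weakstar closure_of domconj f"
  shows "weakstar closure_of B_cone = rec_le_polar"
  by (rule equalityI[OF weakstar_closure_B_cone_subset_polar
        polar_subset_weakstar_closure_B_cone[OF assms]])

lemma fsubspace_polar_iff:
  "fsubspace rec_le_polar \<longleftrightarrow> (\<forall>u\<in>rec_le_xs. - u \<in> rec_le_xs)"
proof
  assume sub: "fsubspace rec_le_polar"
  show "\<forall>u\<in>rec_le_xs. - u \<in> rec_le_xs"
  proof (rule ballI, rule ccontr)
    fix u assume u: "u \<in> rec_le_xs" and nu: "- u \<notin> rec_le_xs"
    then have "\<not> (\<forall>y\<in>domconj f. y (- u) \<le> xs (- u))"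
      using rec_le_if_domconj_le[OF tvs lc f, of "- u" "xs (- u)"] by auto
    then obtain c where c: "c \<in> domconj f" "xs (- u) < c (- u)" by (auto simp: not_le)
    have c_dual: "c \<in> dual" using c(1) by (simp add: domconj_def)
    have "c v \<le> xs v" if "v \<in> rec_le_xs" for v
      using domconj_le_rec[OF tvs lc f c(1), of v] that
        by (metis ereal_less_eq(3) mem_Collect_eq order_trans)
    then have polar_c: "(\<lambda>x. c x - xs x) \<in> rec_le_polar" using c_dual xs by (auto intro!: dual_diff)
    have scale: "\<And>a r. a \<in> rec_le_polar \<Longrightarrow> (\<lambda>x. r * a x) \<in> rec_le_polar"
      using sub unfolding fsubspace_def by blast
    have "(\<lambda>x. (- 1) * (c x - xs x)) \<in> rec_le_polar" by (rule scale[OF polar_c])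
    then have "xs u \<le> c u" using u by auto
    then show False
      using c(2) linear_neg[OF dual_linear[OF c_dual], of u] linear_neg[OF xs_linear, of u] by simp
  qed
next
  assume sym: "\<forall>u\<in>rec_le_xs. - u \<in> rec_le_xs"
  have zero: "z u = 0" if "z \<in> rec_le_polar" "u \<in> rec_le_xs" for z u
  proof -
    have "z u \<le> 0" "z (- u) \<le> 0" using that sym by auto
    moreover have "z (- u) = - z u" using that(1) linear_neg[OF dual_linear] by blast
    ultimately show ?thesis by linarith
  qed
  show "fsubspace rec_le_polar"
    unfolding fsubspace_def
  proof (intro conjI ballI allI)
    show "(\<lambda>_. 0) \<in> rec_le_polar" using dual_scale[OF xs, of 0] by simp
    show "(\<lambda>x. a x + b x) \<in> rec_le_polar" if "a \<in> rec_le_polar" "b \<in> rec_le_polar" for a b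
      using that by (auto intro!: dual_add add_nonpos_nonpos)
    show "(\<lambda>x. c * a x) \<in> rec_le_polar" if "a \<in> rec_le_polar" for a c
      using that zero[OF that] by (auto intro: dual_scale)
  qed
qed

lemma qri_iff_symmetric:
  assumes xB: "xs \<in> weakstar closure_of domconj f"
  shows "xs \<in> qri (weakstar closure_of domconj f) \<longleftrightarrow> (\<forall>u\<in>rec_le_xs. - u \<in> rec_le_xs)"
  unfolding qri_def using xB weakstar_closure_B_cone_eq_polar[OF xB] fsubspace_polar_iff by simp

lemma image_h: "h ` cosets L = range (\<lambda>x. f x - ereal (xs x))"
  unfolding cosets_def image_image hq_proj ..

lemma Inf_h: "Inf (h ` cosets L) = - conj f xs"
proof -
  have "f x - ereal (xs x) = - (ereal (xs x) - f x)" for x by (cases "f x") auto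
  then show ?thesis unfolding image_h conj_def by (simp add: ereal_INF_uminus_eq)
qed

lemma bdd_below_h_iff: "(\<exists>m::real. \<forall>A\<in>cosets L. ereal m \<le> h A) \<longleftrightarrow> xs \<in> domconj f"
proof -
  have "(\<forall>A\<in>cosets L. ereal m \<le> h A) \<longleftrightarrow> ereal m \<le> - conj f xs" for m
    unfolding Inf_h[symmetric] by (simp add: le_Inf_iff)
  moreover have "(\<exists>m::real. ereal m \<le> - conj f xs) \<longleftrightarrow> conj f xs < \<infinity>"
    by (cases "conj f xs") auto
  ultimately show ?thesis unfolding domconj_def using xs by auto
qed

lemma h_attains_Inf_iff: "(\<exists>A\<in>cosets L. h A = Inf (h ` cosets L)) \<longleftrightarrow> xs \<in> Im_subdiff f"
proof -
  \<comment> \<open>a minimizer of \<open>f - x*\<close> is exactly a point where \<open>x*\<close> is a subgradient\<close>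
  have "(\<forall>v. f x - ereal (xs x) \<le> f v - ereal (xs v)) \<longleftrightarrow> xs \<in> subdiff f x" for x
  proof (cases "f x")
    case (real a)
    have "f x - ereal (xs x) \<le> f v - ereal (xs v) \<longleftrightarrow> ereal (xs (v - x)) \<le> f v - f x" for v
      using real Gamma_not_MInfty[OF f, of v]
        by (cases "f v") (auto simp: linear_diff[OF xs_linear])
    then show ?thesis using real xs by (simp add: subdiff_def)
  next
    case PInf
    obtain v a where "f v = ereal a" using Gamma_finite_point[OF f] .
    then show ?thesis using PInf by (auto simp: subdiff_def intro!: exI[of _ v])
  qed (use Gamma_not_MInfty[OF f] in auto)
  moreover have "h (proj L x) = Inf (h ` cosets L) \<longleftrightarrow> (\<forall>v. f x - ereal (xs x) \<le> f v - ereal (xs v))"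
    for x
  proof -
    have "Inf (h ` cosets L) \<le> f x - ereal (xs x)" unfolding image_h by (rule INF_lower) simp
    moreover have "f x - ereal (xs x) \<le> Inf (h ` cosets L)
        \<longleftrightarrow> (\<forall>v. f x - ereal (xs x) \<le> f v - ereal (xs v))"
      unfolding image_h by (simp add: le_INF_iff)
    ultimately show ?thesis unfolding hq_proj by (auto intro: antisym)
  qed
  moreover have "(\<exists>A\<in>cosets L. h A = Inf (h ` cosets L)) \<longleftrightarrow> (\<exists>x. h (proj L x) = Inf (h ` cosets L))"
    by (metis cosets_cases proj_in_cosets)
  ultimately show ?thesis unfolding Im_subdiff_def by simp
qed

end

theorem proposition14:
  fixes f :: "'a::{real_vector,t2_space} \<Rightarrow> ereal"
    and xs :: "'a \<Rightarrow> real"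
    and L :: "'a set"
    and h :: "'a set \<Rightarrow> ereal"
  assumes tvs: "tvs TYPE('a)"
    and lc: "locally_convex TYPE('a)"
    and nontriv: "(UNIV :: 'a set) \<noteq> {0}"
    and f: "Gamma f"
    and xs: "xs \<in> dual"
    and L_def: "L = {u. rec f u = ereal (xs u) \<and> rec f (- u) = ereal (- xs u)}"
    and h_def: "h = hq f xs L"
  shows
    "subspace L \<and> closed L
   \<and> (\<forall>x. f x = h (proj L x) + ereal (xs x))
   \<and> (GammaF (qtop L) (qadd L) (qscale L) (cosets L) h
      \<and> (\<forall>u. recc (qadd L) (qscale L) (cosets L) h (proj L u) = rec f u - ereal (xs u))
      \<and> {proj L u | u. recc (qadd L) (qscale L) (cosets L) h (proj L u) = 0
                    \<and> recc (qadd L) (qscale L) (cosets L) h (proj L (- u)) = 0} = {proj L 0})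
   \<and> ((\<forall>A\<in>cosets L. recc (qadd L) (qscale L) (cosets L) h A \<ge> 0)
        \<longleftrightarrow> xs \<in> weakstar closure_of domconj f)
   \<and> (xs \<in> weakstar closure_of domconj f \<longrightarrow>
        L = Lf f
      \<and> ({A\<in>cosets L. recc (qadd L) (qscale L) (cosets L) h A \<le> 0} = {proj L 0}
           \<longleftrightarrow> xs \<in> qri (weakstar closure_of domconj f))
      \<and> (xs \<in> qri (weakstar closure_of domconj f) \<longleftrightarrow> L = {u. rec f u \<le> ereal (xs u)})
      \<and> (L = {u. rec f u \<le> ereal (xs u)} \<longleftrightarrow> L = {u. rec f u = ereal (xs u)}))
   \<and> (Inf (h ` cosets L) = - conj f xs
      \<and> ((\<exists>m::real. \<forall>A\<in>cosets L. ereal m \<le> h A) \<longleftrightarrow> xs \<in> domconj f))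
   \<and> ((\<exists>A\<in>cosets L. h A = Inf (h ` cosets L)) \<longleftrightarrow> xs \<in> Im_subdiff f)"
proof -
  interpret Q: lineality_quotient f xs L using tvs lc f xs L_def by unfold_locales
  have part_c: "L = Lf f
      \<and> ({A\<in>cosets L. recc (qadd L) (qscale L) (cosets L) h A \<le> 0} = {proj L 0}
           \<longleftrightarrow> xs \<in> qri (weakstar closure_of domconj f))
      \<and> (xs \<in> qri (weakstar closure_of domconj f) \<longleftrightarrow> L = {u. rec f u \<le> ereal (xs u)})
      \<and> (L = {u. rec f u \<le> ereal (xs u)} \<longleftrightarrow> L = {u. rec f u = ereal (xs u)})"
    if xB: "xs \<in> weakstar closure_of domconj f"
    unfolding h_def
    using Q.L_eq_Lf[OF xB] Q.rec_h_le_zero_iff Q.qri_iff_symmetric[OF xB] Q.symmetric_iff_L_eq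
      Q.rec_le_xs_eq[OF xB]
    by simp
  show ?thesis
    unfolding h_def
    using Q.subspace_L Q.closed_L Q.f_eq_hq Q.Gamma_hq Q.rec_h_proj Q.rec_h_lineality
      Q.rec_h_nonneg_iff part_c[unfolded h_def] Q.Inf_h Q.bdd_below_h_iff Q.h_attains_Inf_iff
    by blast
qed

end
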